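(* The family $\{\eta^i_{n,m}\}_{i\geq 1,\,n,m\geq 0}$, where $\eta^i_{n,m}:=K^{-(n+m)/2}\,w_n\xi^i w_m$, is a Riesz basis of $L^2(M)\ominus L^2(C)$. Consequently every $x\in L^2(M)\ominus L^2(C)$ has a unique decomposition $x=\sum_{i\geq1,n,m\geq 0}b^i_{n,m}\eta^i_{n,m}$ with $(b^i_{n,m})\in\ell^2$.
   Context: Setup. Fix an integer $N\geq 1$, let $\Gamma=\mathbb{F}_{N+1}$ be the free group on $N+1$ generators with word length $|g|$, and set $K=2N+1$. Let $M=L(\Gamma)$ with canonical unitaries $u_g$ and trace $\tau$, so $L^2(M)=\ell^2(\Gamma)$. For $n\geq1$ put $w_n=\sum_{|g|=n}u_g$ and $w_0=1$. The radial masa is $C=\{w_1\}''\subset M$; $w_n\in C$ and $\{w_n\}_{n\ge0}$ is an orthogonal basis of $L^2(C)$. For $l\geq 0$ let $\mathcal{K}_l\subset\ell^2(\Gamma)$ be the span of the $\delta_g$ with $|g|=l$ and $Q_l$ the orthogonal projection onto $\mathcal{K}_l$. For $\xi\in\mathcal{K}_l$ and $n,m\geq 0$ put $\xi_{n,m}=K^{-(n+m)/2}Q_{l+n+m}(w_n\xi w_m)$, and $\xi_{n,m}=0$ if $n<0$ or $m<0$. Known facts (Rădulescu): $L^2(M)\ominus L^2(C)=\bigoplus_{i\geq1}\mathcal{H}_i$ (orthogonal sum of $C$-$C$-bimodules), where $\mathcal{H}_i$ is the closed $C$-$C$-bimodule generated by a unit vector $\xi^i\in\mathcal{K}_{l(i)}$,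 $l(i)\geq1$, and only finitely many $i$ have $l(i)=1$. For $l(i)\geq 2$, $\{\xi^i_{n,m}\}_{n,m\ge0}$ is an orthonormal basis of $\mathcal{H}_i$ and $w_n\xi^iw_m=K^{\frac{n+m}{2}}\xi^i_{n,m}-K^{\frac{n+m-2}{2}}(\xi^i_{n,m-2}+\xi^i_{n-2,m})+K^{\frac{n+m-4}{2}}\xi^i_{n-2,m-2}$. For $l(i)=1$ there is $\sigma=\sigma(i)\in\{\pm1\}$ with $w_n\xi^iw_m=K^{\frac{n+m}{2}}\xi^i_{n,m}-K^{\frac{n+m-2}{2}}(\xi^i_{n,m-2}+\xi^i_{n-2,m}+\sigma\xi^i_{n-1,m-1})+\sum_{k\geq2}(-\sigma)^kK^{\frac{n+m-2k}{2}}(\sigma\xi^i_{n-k-1,m-k+1}+\sigma\xi^i_{n-k+1,m-k-1}+2\xi^i_{n-k,m-k})$. For all $i,j$ the maps $T_{i,j}:\xi^i_{n,m}\mapsto\xi^j_{n,m}$ and $S_{i,j}:w_n\xi^iw_m\mapsto w_n\xi^jw_m$ extend to bounded invertible operators $\mathcal{H}_i\to\mathcal{H}_j$ with $\sup_{i,j}\|T_{i,j}^{\pm1}\|<\infty$ and $\sup_{i,j}\|S_{i,j}^{\pm1}\|<\infty$; in particular $\{\xi^i_{n,m}\}_{i\ge1,n,m\ge0}$ is a Riesz basis of $L^2(M)\ominus L^2(C)$. A family $\{v_\alpha\}$ in a separable Hilbert space is a Riesz basis if it is the image of an orthonormal basis under a bounded invertible operator; equivalently there are $0<a\le b$ with $a\sum|c_\alpha|^2\le\|\sum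 c_\alpha v_\alpha\|^2\le b\sum|c_\alpha|^2$ for all $(c_\alpha)\in\ell^2$ and the family has dense span. *)

theory Defs
  imports "HOL-Analysis.Analysis"
begin

text \<open>Free group on the N+1 generators 0..N, as reduced words. A letter (a,True) is
the generator a, (a,False) its inverse. Word length = list length.\<close>

type_synonym word = "(nat \<times> bool) list"
type_synonym vec = "word \<Rightarrow> complex"

fun reduced :: "word \<Rightarrow> bool" where
  "reduced (x # y # ys) = (\<not> (fst x = fst y \<and> snd x \<noteq> snd y) \<and> reduced (y # ys))"
| "reduced _ = True"

definition Gam :: "nat \<Rightarrow> word set" where
  "Gam N = {w. reduced w \<and> (\<forall>x\<in>set w. fst x \<le> N)}"

definition push :: "nat \<times> bool \<Rightarrow> word \<Rightarrow> word" where
  "push x ys = (case ys of [] \<Rightarrow> [x]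
     | y # ys' \<Rightarrow> (if fst y = fst x \<and> snd y \<noteq> snd x then ys' else x # ys))"

definition gmul :: "word \<Rightarrow> word \<Rightarrow> word" where
  "gmul xs ys = foldr push xs ys"

definition ginv :: "word \<Rightarrow> word" where
  "ginv xs = rev (map (\<lambda>(a, b). (a, \<not> b)) xs)"

definition sphere :: "nat \<Rightarrow> nat \<Rightarrow> word set" where
  "sphere N n = {g \<in> Gam N. length g = n}"

definition Kc :: "nat \<Rightarrow> real" where
  "Kc N = 2 * real N + 1"

definition kp :: "nat \<Rightarrow> real \<Rightarrow> complex" where
  "kp N r = complex_of_real (Kc N powr r)"

definition L2 :: "nat \<Rightarrow> vec set" where
  "L2 N = {f. (\<forall>g. g \<notin> Gam N \<longrightarrow> f g = 0) \<and> (\<lambda>g. (cmod (f g))^2) summable_on UNIV}"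

definition ip :: "vec \<Rightarrow> vec \<Rightarrow> complex" where
  "ip f h = infsum (\<lambda>g. f g * cnj (h g)) UNIV"

definition nrm :: "vec \<Rightarrow> real" where
  "nrm f = sqrt (infsum (\<lambda>g. (cmod (f g))^2) UNIV)"

text \<open>w_n as a vector (indicator of the sphere of radius n), and the vector w_n xi w_m:
 (u_a xi u_b)(g) = xi(a^-1 g b^-1).\<close>

definition wv :: "nat \<Rightarrow> nat \<Rightarrow> vec" where
  "wv N n = (\<lambda>g. if g \<in> sphere N n then 1 else 0)"

definition bimul :: "nat \<Rightarrow> nat \<Rightarrow> vec \<Rightarrow> nat \<Rightarrow> vec" where
  "bimul N n \<xi> m = (\<lambda>g. if g \<in> Gam N then
      (\<Sum>a\<in>sphere N n. \<Sum>b\<in>sphere N m. \<xi> (gmul (ginv a) (gmul g (ginv b)))) else 0)"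

definition Qp :: "nat \<Rightarrow> vec \<Rightarrow> vec" where
  "Qp l f = (\<lambda>g. if length g = l then f g else 0)"

definition xinm :: "nat \<Rightarrow> nat \<Rightarrow> vec \<Rightarrow> int \<Rightarrow> int \<Rightarrow> vec" where
  "xinm N l \<xi> n m = (if n < 0 \<or> m < 0 then (\<lambda>_. 0) else
     (\<lambda>g. kp N (- real_of_int (n + m) / 2) * Qp (l + nat (n + m)) (bimul N (nat n) \<xi> (nat m)) g))"

definition lincomb :: "vec set \<Rightarrow> vec set" where
  "lincomb S = {h. \<exists>F c. finite F \<and> F \<subseteq> S \<and> h = (\<lambda>g. \<Sum>v\<in>F. c v * v g)}"

definition cspan :: "nat \<Rightarrow> vec set \<Rightarrow> vec set" where
  "cspan N S = {f \<in> L2 N. \<forall>e>0. \<exists>h\<in>lincomb S. nrm (\<lambda>g. f g - h g) < e}"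

definition L2C :: "nat \<Rightarrow> vec set" where
  "L2C N = cspan N (range (wv N))"

definition ocompl :: "nat \<Rightarrow> vec set" where
  "ocompl N = {f \<in> L2 N. \<forall>h\<in>L2C N. ip f h = 0}"

text \<open>Closed C-C-bimodule generated by xi: closed span of the w_n xi w_m.\<close>

definition Hmod :: "nat \<Rightarrow> vec \<Rightarrow> vec set" where
  "Hmod N \<xi> = cspan N {bimul N n \<xi> m | n m. True}"

definition has_sum_l2 :: "nat \<Rightarrow> ('i \<Rightarrow> vec) \<Rightarrow> 'i set \<Rightarrow> vec \<Rightarrow> bool" where
  "has_sum_l2 N v I x \<longleftrightarrow> x \<in> L2 N \<and>
     (\<forall>e>0. \<exists>F0. finite F0 \<and> F0 \<subseteq> I \<and>
        (\<forall>F. finite F \<and> F0 \<subseteq> F \<and> F \<subseteq> I \<longrightarrow> nrm (\<lambda>g. x g - (\<Sum>\<alpha>\<in>F. v \<alpha> g)) < e))"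

definition sq_summable :: "('i \<Rightarrow> complex) \<Rightarrow> 'i set \<Rightarrow> bool" where
  "sq_summable c I \<longleftrightarrow> (\<lambda>\<alpha>. (cmod (c \<alpha>))^2) summable_on I"

definition riesz_basis :: "nat \<Rightarrow> ('i \<Rightarrow> vec) \<Rightarrow> 'i set \<Rightarrow> vec set \<Rightarrow> bool" where
  "riesz_basis N v I H \<longleftrightarrow> (\<forall>\<alpha>\<in>I. v \<alpha> \<in> H) \<and> cspan N (v ` I) = H \<and>
     (\<exists>a b. 0 < a \<and> a \<le> b \<and>
       (\<forall>c. sq_summable c I \<longrightarrow>
          (\<exists>x. has_sum_l2 N (\<lambda>\<alpha> g. c \<alpha> * v \<alpha> g) I x \<and>
               a * infsum (\<lambda>\<alpha>. (cmod (c \<alpha>))^2) I \<le> (nrm x)^2 \<and>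
               (nrm x)^2 \<le> b * infsum (\<lambda>\<alpha>. (cmod (c \<alpha>))^2) I)))"

definition orthonormal_basis :: "nat \<Rightarrow> ('i \<Rightarrow> vec) \<Rightarrow> vec set \<Rightarrow> bool" where
  "orthonormal_basis N v H \<longleftrightarrow> (\<forall>\<alpha>. v \<alpha> \<in> L2 N) \<and>
     (\<forall>\<alpha> \<beta>. ip (v \<alpha>) (v \<beta>) = (if \<alpha> = \<beta> then 1 else 0)) \<and> cspan N (range v) = H"

definition eta :: "nat \<Rightarrow> vec \<Rightarrow> nat \<Rightarrow> nat \<Rightarrow> vec" where
  "eta N \<xi> n m = (\<lambda>g. kp N (- (real n + real m) / 2) * bimul N n \<xi> m g)"

end

theory Submission
  imports Defs
begin

text \<open>
  Pick \<open>i\<^sub>0\<close> with \<open>l i\<^sub>0 \<ge> 2\<close>; it exists because only finitely many generators have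
  length one. In the orthonormal basis \<open>\<xi>_{n,m}\<close> of \<open>H_i\<^sub>0\<close>, the expansion of \<open>w_n \<xi> w_m\<close>
  says \<open>\<eta>_{n,m} = \<xi>_{n,m} - t (\<xi>_{n,m-2} + \<xi>_{n-2,m}) + t^2 \<xi>_{n-2,m-2}\<close> with \<open>t = 1/K\<close>,
  so on coefficients the synthesis map is \<open>(1 - t S\<^sub>1)(1 - t S\<^sub>2)\<close> for two contractive
  shifts; hence the \<open>\<eta>\<close>'s of \<open>H_i\<^sub>0\<close> have Riesz bounds \<open>(1 - t)^4\<close> and \<open>(1 + t)^4\<close>. The
  uniformly bounded maps \<open>S_{i,j}\<close> carry these bounds, up to a common factor, to every \<open>H_i\<close>,
  and orthogonality of the \<open>H_i\<close> glues them into bounds for every finite section of the whole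
  family. The \<open>\<eta>\<close>'s span a dense subspace of \<open>L\<^sup>2(M) \<ominus> L\<^sup>2(C)\<close>, and completeness of
  \<open>\<ell>\<^sup>2\<close> turns the finite-section bounds into a Riesz basis with unique square-summable
  expansions.
\<close>

section \<open>Square-summable functions\<close>

abbreviation square_summable :: "('a \<Rightarrow> complex) \<Rightarrow> bool" where
  "square_summable f \<equiv> sq_summable f UNIV"

definition sum_sq :: "('a \<Rightarrow> complex) \<Rightarrow> real" where
  "sum_sq f = infsum (\<lambda>x. (cmod (f x))^2) UNIV"

definition l2_norm :: "('a \<Rightarrow> complex) \<Rightarrow> real" where
  "l2_norm f = sqrt (sum_sq f)"

definition l2_inner :: "('a \<Rightarrow> complex) \<Rightarrow> ('a \<Rightarrow> complex) \<Rightarrow> complex" where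
  "l2_inner f h = infsum (\<lambda>x. f x * cnj (h x)) UNIV"

lemma sum_sq_nonneg: "0 \<le> sum_sq f"
  unfolding sum_sq_def by (rule infsum_nonneg) simp

lemma l2_norm_nonneg: "0 \<le> l2_norm f"
  by (simp add: l2_norm_def sum_sq_nonneg)

lemma l2_norm_power2: "(l2_norm f)^2 = sum_sq f"
  by (simp add: l2_norm_def sum_sq_nonneg)

lemma nrm_eq_l2_norm: "nrm f = l2_norm f"
  by (simp add: nrm_def l2_norm_def sum_sq_def)

lemma ip_eq_l2_inner: "ip f h = l2_inner f h"
  by (simp add: ip_def l2_inner_def)

lemma square_summable_if_finite_sums_bounded:
  assumes "\<And>E. finite E \<Longrightarrow> (\<Sum>x\<in>E. (cmod (f x))^2) \<le> C"
  shows "square_summable f" "sum_sq f \<le> C"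
proof -
  show s: "square_summable f" unfolding sq_summable_def
    by (rule nonneg_bdd_above_summable_on) (auto intro!: bdd_aboveI[of _ C] assms)
  show "sum_sq f \<le> C" unfolding sum_sq_def
    by (rule infsum_le_finite_sums) (use s assms in \<open>auto simp: sq_summable_def\<close>)
qed

lemma finite_sum_sq_le_sum_sq:
  "square_summable f \<Longrightarrow> finite E \<Longrightarrow> (\<Sum>x\<in>E. (cmod (f x))^2) \<le> sum_sq f"
  unfolding sq_summable_def sum_sq_def by (rule finite_sum_le_infsum) auto

lemma
  assumes "finite S" "\<And>x. x \<notin> S \<Longrightarrow> f x = 0"
  shows square_summable_finite_support: "square_summable f"
    and sum_sq_finite_support: "sum_sq f = (\<Sum>x\<in>S. (cmod (f x))^2)"
proof -
  have bound: "(\<Sum>x\<in>E. (cmod (f x))^2) \<le> (\<Sum>x\<in>S. (cmod (f x))^2)" if "finite E" for E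
  proof -
    have "(\<Sum>x\<in>E. (cmod (f x))^2) = (\<Sum>x\<in>E \<inter> S. (cmod (f x))^2)"
      using that assms by (intro sum.mono_neutral_right) auto
    also have "\<dots> \<le> (\<Sum>x\<in>S. (cmod (f x))^2)"
      using assms by (intro sum_mono2) auto
    finally show ?thesis .
  qed
  show s: "square_summable f"
    by (rule square_summable_if_finite_sums_bounded(1)[OF bound])
  show "sum_sq f = (\<Sum>x\<in>S. (cmod (f x))^2)"
    using square_summable_if_finite_sums_bounded(2)[OF bound] finite_sum_sq_le_sum_sq[OF s assms(1)]
    by linarith
qed

lemma square_summable_scale: "square_summable f \<Longrightarrow> square_summable (\<lambda>x. c * f x)"
  unfolding sq_summable_def by (simp add: norm_mult power_mult_distrib summable_on_cmult_right)

lemma sum_sq_scale: "square_summable f \<Longrightarrow> sum_sq (\<lambda>x. c * f x) = (cmod c)^2 * sum_sq f"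
  unfolding sq_summable_def sum_sq_def by (simp add: norm_mult power_mult_distrib infsum_cmult_right)

lemma l2_norm_scale: "square_summable f \<Longrightarrow> l2_norm (\<lambda>x. c * f x) = cmod c * l2_norm f"
  by (simp add: l2_norm_def sum_sq_scale real_sqrt_mult)

lemma square_summable_add:
  assumes "square_summable f" "square_summable h"
  shows "square_summable (\<lambda>x. f x + h x)"
proof -
  have "(\<lambda>x. 2 * (cmod (f x))^2 + 2 * (cmod (h x))^2) summable_on UNIV"
    using assms unfolding sq_summable_def by (intro summable_on_add summable_on_cmult_right)
  moreover have "(cmod (f x + h x))^2 \<le> 2 * (cmod (f x))^2 + 2 * (cmod (h x))^2" for x
  proof -
    have "(cmod (f x + h x))^2 \<le> (cmod (f x) + cmod (h x))^2"
      by (simp add: power_mono norm_triangle_ineq)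
    also have "\<dots> \<le> 2 * (cmod (f x))^2 + 2 * (cmod (h x))^2"
      using zero_le_power2[of "cmod (f x) - cmod (h x)"] by (simp add: power2_sum power2_diff)
    finally show ?thesis .
  qed
  ultimately show ?thesis unfolding sq_summable_def
    by (rule summable_on_comparison_test) auto
qed

lemma square_summable_minus: "square_summable f \<Longrightarrow> square_summable (\<lambda>x. - f x)"
  unfolding sq_summable_def by simp

lemma square_summable_diff:
  "square_summable f \<Longrightarrow> square_summable h \<Longrightarrow> square_summable (\<lambda>x. f x - h x)"
  using square_summable_add[of f "\<lambda>x. - h x"] square_summable_minus[of h] by simp

lemma square_summable_zero: "square_summable (\<lambda>x. 0)"
  unfolding sq_summable_def by simp

lemma square_summable_sum:
  "finite J \<Longrightarrow> (\<And>j. j \<in> J \<Longrightarrow> square_summable (F j)) \<Longrightarrow> square_summable (\<lambda>x. \<Sum>j\<in>J. F j x)"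
  by (induction J rule: finite_induct) (auto intro: square_summable_add square_summable_zero)

lemma norm_le_l2_norm: "square_summable f \<Longrightarrow> cmod (f x) \<le> l2_norm f"
  using finite_sum_sq_le_sum_sq[of f "{x}"] by (simp add: l2_norm_def real_le_rsqrt)

lemma L2_set_le_l2_norm:
  "square_summable f \<Longrightarrow> finite E \<Longrightarrow> L2_set (\<lambda>x. cmod (f x)) E \<le> l2_norm f"
  unfolding L2_set_def l2_norm_def using finite_sum_sq_le_sum_sq by (simp add: real_sqrt_le_iff)

lemma l2_norm_triangle:
  assumes "square_summable f" "square_summable h"
  shows "l2_norm (\<lambda>x. f x + h x) \<le> l2_norm f + l2_norm h"
proof -
  have "(\<Sum>x\<in>E. (cmod (f x + h x))^2) \<le> (l2_norm f + l2_norm h)^2" if "finite E" for E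
  proof -
    have eq: "(\<Sum>x\<in>E. (cmod (f x + h x))^2) = (L2_set (\<lambda>x. cmod (f x + h x)) E)^2"
      by (simp add: L2_set_def sum_nonneg)
    have "L2_set (\<lambda>x. cmod (f x + h x)) E \<le> L2_set (\<lambda>x. cmod (f x) + cmod (h x)) E"
      by (rule L2_set_mono) (auto intro: norm_triangle_ineq)
    also have "\<dots> \<le> L2_set (\<lambda>x. cmod (f x)) E + L2_set (\<lambda>x. cmod (h x)) E"
      by (rule L2_set_triangle_ineq)
    also have "\<dots> \<le> l2_norm f + l2_norm h"
      using L2_set_le_l2_norm[OF assms(1) that] L2_set_le_l2_norm[OF assms(2) that] by linarith
    finally have "L2_set (\<lambda>x. cmod (f x + h x)) E \<le> l2_norm f + l2_norm h" .
    thus ?thesis unfolding eq by (simp add: power_mono)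
  qed
  hence "sum_sq (\<lambda>x. f x + h x) \<le> (l2_norm f + l2_norm h)^2"
    by (rule square_summable_if_finite_sums_bounded(2))
  thus ?thesis
    using l2_norm_nonneg[of f] l2_norm_nonneg[of h]
    by (simp add: l2_norm_def[of "\<lambda>x. f x + h x"] real_sqrt_le_iff real_le_lsqrt)
qed

lemma
  assumes "\<And>x. cmod (f x) \<le> cmod (h x)" "square_summable h"
  shows square_summable_dominated: "square_summable f"
    and l2_norm_dominated: "l2_norm f \<le> l2_norm h"
proof -
  have bound: "(\<Sum>x\<in>E. (cmod (f x))^2) \<le> sum_sq h" if "finite E" for E
  proof -
    have "(\<Sum>x\<in>E. (cmod (f x))^2) \<le> (\<Sum>x\<in>E. (cmod (h x))^2)"
      by (rule sum_mono) (simp add: assms(1) power_mono)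
    thus ?thesis using finite_sum_sq_le_sum_sq[OF assms(2) that] by linarith
  qed
  show "square_summable f" by (rule square_summable_if_finite_sums_bounded(1)[OF bound])
  show "l2_norm f \<le> l2_norm h"
    using square_summable_if_finite_sums_bounded(2)[OF bound] by (simp add: l2_norm_def)
qed

lemma
  assumes "inj h" "square_summable f"
  shows square_summable_comp_inj: "square_summable (\<lambda>x. f (h x))"
    and l2_norm_comp_inj: "l2_norm (\<lambda>x. f (h x)) \<le> l2_norm f"
proof -
  have bound: "(\<Sum>x\<in>E. (cmod (f (h x)))^2) \<le> sum_sq f" if "finite E" for E
  proof -
    have "(\<Sum>x\<in>E. (cmod (f (h x)))^2) = (\<Sum>y\<in>h ` E. (cmod (f y))^2)"
      using assms(1) by (simp add: sum.reindex inj_on_def inj_def)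
    also have "\<dots> \<le> sum_sq f" using finite_sum_sq_le_sum_sq[OF assms(2)] that by auto
    finally show ?thesis .
  qed
  show "square_summable (\<lambda>x. f (h x))" by (rule square_summable_if_finite_sums_bounded(1)[OF bound])
  show "l2_norm (\<lambda>x. f (h x)) \<le> l2_norm f"
    using square_summable_if_finite_sums_bounded(2)[OF bound] by (simp add: l2_norm_def)
qed

lemma l2_norm_minus: "l2_norm (\<lambda>x. - f x) = l2_norm f"
  by (simp add: l2_norm_def sum_sq_def)

lemma l2_norm_diff_commute: "l2_norm (\<lambda>x. f x - h x) = l2_norm (\<lambda>x. h x - f x)"
  using l2_norm_minus[of "\<lambda>x. h x - f x"] by simp

lemma l2_norm_diff_le:
  "square_summable f \<Longrightarrow> square_summable h \<Longrightarrow> l2_norm (\<lambda>x. f x - h x) \<le> l2_norm f + l2_norm h"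
  using l2_norm_triangle[of f "\<lambda>x. - h x"] square_summable_minus[of h] l2_norm_minus[of h] by simp

lemma l2_norm_diff_triangle:
  assumes "square_summable f" "square_summable h" "square_summable k"
  shows "l2_norm (\<lambda>x. f x - k x) \<le> l2_norm (\<lambda>x. f x - h x) + l2_norm (\<lambda>x. h x - k x)"
  using l2_norm_triangle[OF square_summable_diff[OF assms(1,2)] square_summable_diff[OF assms(2,3)]]
  by simp

lemma l2_norm_reverse_triangle:
  assumes "square_summable f" "square_summable h"
  shows "\<bar>l2_norm f - l2_norm h\<bar> \<le> l2_norm (\<lambda>x. f x - h x)"
  using l2_norm_diff_triangle[OF assms(1) _ square_summable_zero, of h]
    l2_norm_diff_triangle[OF assms(2) _ square_summable_zero, of f] assms
    l2_norm_diff_commute[of f h] by simp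

lemma l2_inner_summable:
  assumes "square_summable f" "square_summable h"
  shows "(\<lambda>x. f x * cnj (h x)) summable_on UNIV"
proof (rule abs_summable_summable)
  have "(\<lambda>x. (cmod (f x))^2 + (cmod (h x))^2) summable_on UNIV"
    using assms unfolding sq_summable_def by (rule summable_on_add)
  moreover have "norm (f x * cnj (h x)) \<le> (cmod (f x))^2 + (cmod (h x))^2" for x
  proof -
    have "0 \<le> cmod (f x) * cmod (h x)" by simp
    moreover have "2 * (cmod (f x) * cmod (h x)) \<le> (cmod (f x))^2 + (cmod (h x))^2"
      using zero_le_power2[of "cmod (f x) - cmod (h x)"] by (simp add: power2_diff)
    ultimately show ?thesis unfolding norm_mult complex_mod_cnj by linarith
  qed
  ultimately show "(\<lambda>x. norm (f x * cnj (h x))) summable_on UNIV"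
    by (rule summable_on_comparison_test) auto
qed

lemma l2_inner_self:
  assumes "square_summable f" shows "l2_inner f f = of_real (sum_sq f)"
proof -
  have "l2_inner f f = infsum (\<lambda>x. of_real ((cmod (f x))^2)) UNIV"
    unfolding l2_inner_def by (simp only: complex_norm_square)
  also have "\<dots> = of_real (sum_sq f)"
    unfolding sum_sq_def
    by (rule infsumI, rule has_sum_of_real) (use assms in \<open>simp add: sq_summable_def\<close>)
  finally show ?thesis .
qed

lemma sum_sq_add:
  assumes "square_summable f" "square_summable h"
  shows "sum_sq (\<lambda>x. f x + h x) = sum_sq f + sum_sq h + 2 * Re (l2_inner f h)"
proof -
  have fh: "(\<lambda>x. f x * cnj (h x)) summable_on UNIV" by (rule l2_inner_summable[OF assms])
  have sq: "(\<lambda>x. (cmod (f x))^2) summable_on UNIV" "(\<lambda>x. (cmod (h x))^2) summable_on UNIV"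
    using assms by (simp_all add: sq_summable_def)
  have "(cmod (f x + h x))^2 = (cmod (f x))^2 + (cmod (h x))^2 + 2 * Re (f x * cnj (h x))" for x
    by (simp only: cmod_power2) (simp add: power2_eq_square algebra_simps)
  hence "sum_sq (\<lambda>x. f x + h x) =
      infsum (\<lambda>x. ((cmod (f x))^2 + (cmod (h x))^2) + 2 * Re (f x * cnj (h x))) UNIV"
    by (simp add: sum_sq_def)
  also have "\<dots> = infsum (\<lambda>x. (cmod (f x))^2 + (cmod (h x))^2) UNIV
      + infsum (\<lambda>x. 2 * Re (f x * cnj (h x))) UNIV"
    by (intro infsum_add summable_on_add sq summable_on_cmult_right summable_on_Re fh)
  also have "infsum (\<lambda>x. (cmod (f x))^2 + (cmod (h x))^2) UNIV = sum_sq f + sum_sq h"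
    unfolding sum_sq_def by (rule infsum_add[OF sq])
  also have "infsum (\<lambda>x. 2 * Re (f x * cnj (h x))) UNIV = 2 * Re (l2_inner f h)"
    unfolding l2_inner_def using fh by (simp only: infsum_cmult_right summable_on_Re infsum_Re)
  finally show ?thesis .
qed

lemma l2_inner_add_right:
  assumes "square_summable f" "square_summable h" "square_summable k"
  shows "l2_inner f (\<lambda>x. h x + k x) = l2_inner f h + l2_inner f k"
  unfolding l2_inner_def using l2_inner_summable[OF assms(1,2)] l2_inner_summable[OF assms(1,3)]
  by (simp add: distrib_left infsum_add)

lemma l2_inner_sum_right:
  assumes "finite J" "square_summable f" "\<And>j. j \<in> J \<Longrightarrow> square_summable (F j)"
  shows "l2_inner f (\<lambda>x. \<Sum>j\<in>J. F j x) = (\<Sum>j\<in>J. l2_inner f (F j))"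
  using assms
proof (induction J rule: finite_induct)
  case empty thus ?case by (simp add: l2_inner_def)
next
  case (insert a J)
  hence "l2_inner f (\<lambda>x. F a x + (\<Sum>j\<in>J. F j x)) = l2_inner f (F a) + l2_inner f (\<lambda>x. \<Sum>j\<in>J. F j x)"
    by (intro l2_inner_add_right) (auto intro!: square_summable_sum)
  thus ?case using insert by simp
qed

lemma l2_inner_scale_left: "l2_inner (\<lambda>x. c * f x) h = c * l2_inner f h"
  unfolding l2_inner_def by (simp add: mult.assoc infsum_cmult_right')

lemma l2_inner_scale_right: "l2_inner f (\<lambda>x. c * h x) = cnj c * l2_inner f h"
  unfolding l2_inner_def by (simp add: mult.left_commute infsum_cmult_right')

lemma sum_sq_orthogonal_sum:
  assumes "finite J" "\<And>j. j \<in> J \<Longrightarrow> square_summable (F j)"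
    "\<And>j k. j \<in> J \<Longrightarrow> k \<in> J \<Longrightarrow> j \<noteq> k \<Longrightarrow> l2_inner (F j) (F k) = 0"
  shows "sum_sq (\<lambda>x. \<Sum>j\<in>J. F j x) = (\<Sum>j\<in>J. sum_sq (F j))"
  using assms
proof (induction J rule: finite_induct)
  case empty thus ?case by (simp add: sum_sq_def)
next
  case (insert a J)
  have s: "square_summable (\<lambda>x. \<Sum>j\<in>J. F j x)" using insert by (intro square_summable_sum) auto
  have "l2_inner (F a) (\<lambda>x. \<Sum>j\<in>J. F j x) = (\<Sum>j\<in>J. l2_inner (F a) (F j))"
    using insert by (intro l2_inner_sum_right) auto
  also have "\<dots> = 0" using insert by (intro sum.neutral) auto
  finally have "sum_sq (\<lambda>x. F a x + (\<Sum>j\<in>J. F j x)) = sum_sq (F a) + sum_sq (\<lambda>x. \<Sum>j\<in>J. F j x)"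
    using sum_sq_add[OF _ s, of "F a"] insert by simp
  thus ?case using insert by simp
qed

lemma sum_sq_orthonormal_combination:
  assumes "finite S" "\<And>p. p \<in> S \<Longrightarrow> square_summable (X p)"
    "\<And>p q. p \<in> S \<Longrightarrow> q \<in> S \<Longrightarrow> l2_inner (X p) (X q) = (if p = q then 1 else 0)"
  shows "sum_sq (\<lambda>x. \<Sum>p\<in>S. c p * X p x) = (\<Sum>p\<in>S. (cmod (c p))^2)"
proof -
  have "sum_sq (\<lambda>x. \<Sum>p\<in>S. c p * X p x) = (\<Sum>p\<in>S. sum_sq (\<lambda>x. c p * X p x))"
    using assms
    by (intro sum_sq_orthogonal_sum)
       (auto intro: square_summable_scale simp: l2_inner_scale_left l2_inner_scale_right)
  also have "\<dots> = (\<Sum>p\<in>S. (cmod (c p))^2)"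
  proof (rule sum.cong)
    fix p assume p: "p \<in> S"
    have "sum_sq (X p) = 1"
      using l2_inner_self[OF assms(2)[OF p]] assms(3)[OF p p] by (metis of_real_eq_1_iff)
    thus "sum_sq (\<lambda>x. c p * X p x) = (cmod (c p))^2" using sum_sq_scale[OF assms(2)[OF p]] by simp
  qed simp
  finally show ?thesis .
qed

lemma l2_limit_with_rate:
  fixes f :: "nat \<Rightarrow> 'a \<Rightarrow> complex"
  assumes sq: "\<And>k. square_summable (f k)" and r: "r \<longlonglongrightarrow> 0"
    and rate: "\<And>j k. k \<le> j \<Longrightarrow> l2_norm (\<lambda>x. f j x - f k x) \<le> r k"
  shows "\<exists>y. square_summable y \<and> (\<forall>x. (\<lambda>k. f k x) \<longlonglongrightarrow> y x) \<and>
    (\<forall>k. l2_norm (\<lambda>x. y x - f k x) \<le> r k)"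
proof -
  have pointwise: "cmod (f j x - f k x) \<le> r k" if "k \<le> j" for j k x
    using norm_le_l2_norm[OF square_summable_diff[OF sq sq]] rate[OF that] by (rule order_trans)
  have r_nonneg: "0 \<le> r k" for k using rate[of k k] by (simp add: l2_norm_def sum_sq_def)
  have Cauchy: "Cauchy (\<lambda>k. f k x)" for x
  proof (rule CauchyI)
    fix e :: real assume "e > 0"
    obtain K where "\<forall>k\<ge>K. norm (r k - 0) < e" using LIMSEQ_D[OF r \<open>e > 0\<close>] by blast
    hence K: "\<forall>k\<ge>K. r k < e" by auto
    have "cmod (f m x - f n x) < e" if "K \<le> m" "K \<le> n" for m n
    proof (cases "n \<le> m")
      case True
      have "cmod (f m x - f n x) \<le> r n" using True by (rule pointwise)
      thus ?thesis using K that(2) by (meson order.strict_trans1)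
    next
      case False
      have "cmod (f n x - f m x) \<le> r m" using False by (intro pointwise) simp
      thus ?thesis using K that(1) by (metis norm_minus_commute order.strict_trans1)
    qed
    thus "\<exists>M. \<forall>m\<ge>M. \<forall>n\<ge>M. norm (f m x - f n x) < e" by blast
  qed
  define y where "y x = lim (\<lambda>k. f k x)" for x
  have lim: "(\<lambda>k. f k x) \<longlonglongrightarrow> y x" for x
    unfolding y_def using Cauchy Cauchy_convergent convergent_LIMSEQ_iff by blast
  have "(\<Sum>x\<in>E. (cmod (y x - f k x))^2) \<le> (r k)^2" if "finite E" for E k
  proof (rule tendsto_le[OF trivial_limit_sequentially tendsto_const])
    show "(\<lambda>j. \<Sum>x\<in>E. (cmod (f j x - f k x))^2) \<longlonglongrightarrow> (\<Sum>x\<in>E. (cmod (y x - f k x))^2)"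
      by (intro tendsto_intros lim)
    have "(\<Sum>x\<in>E. (cmod (f j x - f k x))^2) \<le> (r k)^2" if "k \<le> j" for j
      using finite_sum_sq_le_sum_sq[OF square_summable_diff[OF sq sq] \<open>finite E\<close>, of j k]
        power_mono[OF rate[OF that] l2_norm_nonneg, of 2]
      by (simp add: l2_norm_power2)
    thus "eventually (\<lambda>j. (\<Sum>x\<in>E. (cmod (f j x - f k x))^2) \<le> (r k)^2) sequentially"
      by (rule eventually_sequentiallyI)
  qed
  hence diff: "square_summable (\<lambda>x. y x - f k x)" "l2_norm (\<lambda>x. y x - f k x) \<le> r k" for k
    using square_summable_if_finite_sums_bounded[of "\<lambda>x. y x - f k x" "(r k)^2"] r_nonneg[of k]
    by (auto simp: l2_norm_def real_sqrt_le_iff real_le_lsqrt)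
  have "square_summable (\<lambda>x. (y x - f 0 x) + f 0 x)" by (intro square_summable_add diff sq)
  thus ?thesis using lim diff by auto
qed

section \<open>Closed spans in \<open>\<ell>\<^sup>2(\<Gamma>)\<close>\<close>

lemma L2_iff: "f \<in> L2 N \<longleftrightarrow> (\<forall>g. g \<notin> Gam N \<longrightarrow> f g = 0) \<and> square_summable f"
  by (simp add: L2_def sq_summable_def)

lemma L2_square_summable: "f \<in> L2 N \<Longrightarrow> square_summable f" by (simp add: L2_iff)

lemma L2_add: "f \<in> L2 N \<Longrightarrow> h \<in> L2 N \<Longrightarrow> (\<lambda>g. f g + h g) \<in> L2 N"
  by (simp add: L2_iff square_summable_add)

lemma L2_diff: "f \<in> L2 N \<Longrightarrow> h \<in> L2 N \<Longrightarrow> (\<lambda>g. f g - h g) \<in> L2 N"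
  by (simp add: L2_iff square_summable_diff)

lemma L2_scale: "f \<in> L2 N \<Longrightarrow> (\<lambda>g. c * f g) \<in> L2 N"
  by (simp add: L2_iff square_summable_scale)

lemma L2_zero: "(\<lambda>g. 0) \<in> L2 N"
  by (simp add: L2_iff square_summable_zero)
lemma L2_sum: "finite K \<Longrightarrow> (\<And>k. k \<in> K \<Longrightarrow> F k \<in> L2 N) \<Longrightarrow> (\<lambda>g. \<Sum>k\<in>K. F k g) \<in> L2 N"
  by (induction K rule: finite_induct) (auto intro: L2_add L2_zero)

lemma finite_sphere: "finite (sphere N L)"
proof -
  have "sphere N L \<subseteq> {xs. set xs \<subseteq> {0..N} \<times> UNIV \<and> length xs = L}"
    by (auto simp: sphere_def Gam_def)
  moreover have "finite {xs. set xs \<subseteq> ({0..N} \<times> (UNIV::bool set)) \<and> length xs = L}"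
    by (rule finite_lists_length_eq) simp
  ultimately show ?thesis by (rule finite_subset)
qed

lemma Qp_L2: "(\<And>g. g \<notin> Gam N \<Longrightarrow> f g = 0) \<Longrightarrow> Qp L f \<in> L2 N"
  unfolding L2_iff
proof
  assume z: "\<And>g. g \<notin> Gam N \<Longrightarrow> f g = 0"
  show "\<forall>g. g \<notin> Gam N \<longrightarrow> Qp L f g = 0" using z by (simp add: Qp_def)
  show "square_summable (Qp L f)"
    by (rule square_summable_finite_support[OF finite_sphere[of N L]]) (use z in \<open>auto simp: Qp_def sphere_def\<close>)
qed

lemma xinm_L2: "xinm N l \<xi> n m \<in> L2 N"
  unfolding xinm_def
  by (auto intro!: L2_scale[of "Qp _ _"] Qp_L2 L2_zero simp: bimul_def)

lemma eta_L2: "bimul N n \<xi> m \<in> L2 N \<Longrightarrow> eta N \<xi> n m \<in> L2 N"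
  unfolding eta_def by (rule L2_scale)

lemma lincomb_zero: "(\<lambda>g. 0) \<in> lincomb T"
  unfolding lincomb_def by (rule CollectI, rule exI[of _ "{}"]) auto

lemma lincomb_mem: "v \<in> T \<Longrightarrow> v \<in> lincomb T"
  unfolding lincomb_def by (rule CollectI, rule exI[of _ "{v}"], rule exI[of _ "\<lambda>_. 1"]) auto

lemma lincomb_scale: "h \<in> lincomb T \<Longrightarrow> (\<lambda>g. a * h g) \<in> lincomb T"
  unfolding lincomb_def
proof (elim CollectE exE conjE, intro CollectI)
  fix F c assume "finite F" "F \<subseteq> T" "h = (\<lambda>g. \<Sum>v\<in>F. c v * v g)"
  thus "\<exists>F c. finite F \<and> F \<subseteq> T \<and> (\<lambda>g. a * h g) = (\<lambda>g. \<Sum>v\<in>F. c v * v g)"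
    by (intro exI[of _ F] exI[of _ "\<lambda>v. a * c v"]) (auto simp: sum_distrib_left mult.assoc)
qed

lemma lincomb_add: "h1 \<in> lincomb T \<Longrightarrow> h2 \<in> lincomb T \<Longrightarrow> (\<lambda>g. h1 g + h2 g) \<in> lincomb T"
  unfolding lincomb_def
proof (elim CollectE exE conjE, intro CollectI)
  fix F1 c1 F2 c2 assume a: "finite F1" "F1 \<subseteq> T" "h1 = (\<lambda>g. \<Sum>v\<in>F1. c1 v * v g)"
    "finite F2" "F2 \<subseteq> T" "h2 = (\<lambda>g. \<Sum>v\<in>F2. c2 v * v g)"
  define c where "c v = (if v \<in> F1 then c1 v else 0) + (if v \<in> F2 then c2 v else 0)" for v
  have "(\<lambda>g. h1 g + h2 g) = (\<lambda>g. \<Sum>v\<in>F1 \<union> F2. c v * v g)"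
  proof
    fix g
    have e1: "(\<Sum>v\<in>F1. c1 v * v g) = (\<Sum>v\<in>F1 \<union> F2. (if v \<in> F1 then c1 v else 0) * v g)"
      using a by (intro sum.mono_neutral_cong_left) auto
    have e2: "(\<Sum>v\<in>F2. c2 v * v g) = (\<Sum>v\<in>F1 \<union> F2. (if v \<in> F2 then c2 v else 0) * v g)"
      using a by (intro sum.mono_neutral_cong_left) auto
    show "h1 g + h2 g = (\<Sum>v\<in>F1 \<union> F2. c v * v g)"
      using a e1 e2 by (simp add: c_def distrib_right sum.distrib)
  qed
  thus "\<exists>F c. finite F \<and> F \<subseteq> T \<and> (\<lambda>g. h1 g + h2 g) = (\<lambda>g. \<Sum>v\<in>F. c v * v g)"
    using a by blast
qed

lemma lincomb_sum:
  "finite A \<Longrightarrow> (\<And>a. a \<in> A \<Longrightarrow> u a \<in> lincomb T) \<Longrightarrow> (\<lambda>g. \<Sum>a\<in>A. c a * u a g) \<in> lincomb T"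
proof (induction A rule: finite_induct)
  case empty thus ?case by (simp add: lincomb_zero)
next
  case (insert a A)
  have "(\<lambda>g. c a * u a g + (\<Sum>a\<in>A. c a * u a g)) \<in> lincomb T"
    using insert by (intro lincomb_add lincomb_scale) auto
  thus ?case using insert by simp
qed

lemma lincomb_mono: "T \<subseteq> T' \<Longrightarrow> lincomb T \<subseteq> lincomb T'"
  unfolding lincomb_def by blast

lemma lincomb_L2: "T \<subseteq> L2 N \<Longrightarrow> lincomb T \<subseteq> L2 N"
  unfolding lincomb_def by (auto intro!: L2_sum L2_scale)

lemma cspan_L2: "cspan N T \<subseteq> L2 N" by (auto simp: cspan_def)

lemma cspan_square_summable: "f \<in> cspan N T \<Longrightarrow> square_summable f"
  using cspan_L2 L2_square_summable by blast

lemma lincomb_square_summable: "T \<subseteq> L2 N \<Longrightarrow> h \<in> lincomb T \<Longrightarrow> square_summable h"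
  using lincomb_L2 L2_square_summable by blast

lemma cspanD: "f \<in> cspan N T \<Longrightarrow> e > 0 \<Longrightarrow> \<exists>h\<in>lincomb T. nrm (\<lambda>g. f g - h g) < e"
  by (simp add: cspan_def)

lemma cspanI: "f \<in> L2 N \<Longrightarrow> (\<And>e. e > 0 \<Longrightarrow> \<exists>h\<in>lincomb T. nrm (\<lambda>g. f g - h g) < e) \<Longrightarrow> f \<in> cspan N T"
  by (simp add: cspan_def)

lemma lincomb_cspan: "T \<subseteq> L2 N \<Longrightarrow> lincomb T \<subseteq> cspan N T"
proof
  fix h assume T: "T \<subseteq> L2 N" and h: "h \<in> lincomb T"
  have "h \<in> L2 N" using lincomb_L2[OF T] h by auto
  moreover have "nrm (\<lambda>g. h g - h g) < e" if "e > 0" for e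
    using that by (simp add: nrm_eq_l2_norm l2_norm_def sum_sq_def)
  ultimately show "h \<in> cspan N T" using h by (intro cspanI) (auto intro!: bexI[where x=h])
qed

lemma cspan_mono: "T \<subseteq> T' \<Longrightarrow> cspan N T \<subseteq> cspan N T'"
  unfolding cspan_def using lincomb_mono by blast

lemma cspan_zero: "(\<lambda>g. 0) \<in> cspan N T"
  by (intro cspanI L2_zero bexI[OF _ lincomb_zero]) (simp add: nrm_eq_l2_norm l2_norm_def sum_sq_def)

lemma cspan_add:
  assumes T: "T \<subseteq> L2 N" and f: "f \<in> cspan N T" and h: "h \<in> cspan N T"
  shows "(\<lambda>g. f g + h g) \<in> cspan N T"
proof (rule cspanI)
  show "(\<lambda>g. f g + h g) \<in> L2 N" using f h cspan_L2 by (auto intro: L2_add)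
  fix e :: real assume "e > 0"
  hence e2: "e/2 > 0" by simp
  obtain h1 where h1: "h1 \<in> lincomb T" "nrm (\<lambda>g. f g - h1 g) < e/2"
    using cspanD[OF f e2] by blast
  obtain h2 where h2: "h2 \<in> lincomb T" "nrm (\<lambda>g. h g - h2 g) < e/2"
    using cspanD[OF h e2] by blast
  have s: "square_summable f" "square_summable h" "square_summable h1" "square_summable h2"
    using f h h1 h2 cspan_square_summable lincomb_square_summable[OF T] by auto
  have "l2_norm (\<lambda>g. (f g - h1 g) + (h g - h2 g)) \<le> l2_norm (\<lambda>g. f g - h1 g) + l2_norm (\<lambda>g. h g - h2 g)"
    by (rule l2_norm_triangle) (use s in \<open>auto intro: square_summable_diff\<close>)
  moreover have "(\<lambda>g. f g + h g - (h1 g + h2 g)) = (\<lambda>g. (f g - h1 g) + (h g - h2 g))"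
    by (rule ext) (simp add: algebra_simps)
  ultimately have "nrm (\<lambda>g. f g + h g - (h1 g + h2 g)) < e"
    using h1 h2 by (simp add: nrm_eq_l2_norm)
  thus "\<exists>h'\<in>lincomb T. nrm (\<lambda>g. f g + h g - h' g) < e"
    using lincomb_add[OF h1(1) h2(1)] by (intro bexI[where x="\<lambda>g. h1 g + h2 g"]) auto
qed

lemma cspan_scale:
  assumes T: "T \<subseteq> L2 N" and f: "f \<in> cspan N T"
  shows "(\<lambda>g. a * f g) \<in> cspan N T"
proof (cases "a = 0")
  case True thus ?thesis using cspan_zero by simp
next
  case False
  show ?thesis
  proof (rule cspanI)
    show "(\<lambda>g. a * f g) \<in> L2 N" using f cspan_L2 by (auto intro: L2_scale)
    fix e :: real assume "e > 0"
    hence "e / cmod a > 0" using False by simp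
    then obtain h1 where h1: "h1 \<in> lincomb T" "nrm (\<lambda>g. f g - h1 g) < e / cmod a"
      using cspanD[OF f] by blast
    have s: "square_summable (\<lambda>g. f g - h1 g)"
      using cspan_square_summable[OF f] lincomb_square_summable[OF T h1(1)] by (rule square_summable_diff)
    have eq: "(\<lambda>g. a * f g - a * h1 g) = (\<lambda>g. a * (f g - h1 g))"
      by (rule ext) (simp add: algebra_simps)
    have "nrm (\<lambda>g. a * f g - a * h1 g) = cmod a * nrm (\<lambda>g. f g - h1 g)"
      unfolding eq nrm_eq_l2_norm by (rule l2_norm_scale[OF s])
    also have "\<dots> < e" using h1 False by (simp add: field_simps)
    finally show "\<exists>h'\<in>lincomb T. nrm (\<lambda>g. a * f g - h' g) < e"
      using lincomb_scale[OF h1(1), of a] by (intro bexI[where x="\<lambda>g. a * h1 g"]) auto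
  qed
qed

lemma cspan_sum:
  assumes T: "T \<subseteq> L2 N"
  shows "finite A \<Longrightarrow> (\<And>a. a \<in> A \<Longrightarrow> u a \<in> cspan N T) \<Longrightarrow> (\<lambda>g. \<Sum>a\<in>A. c a * u a g) \<in> cspan N T"
proof (induction A rule: finite_induct)
  case empty thus ?case by (simp add: cspan_zero)
next
  case (insert a A)
  have "(\<lambda>g. c a * u a g + (\<Sum>a\<in>A. c a * u a g)) \<in> cspan N T"
    using insert by (intro cspan_add[OF T] cspan_scale[OF T]) auto
  thus ?case using insert by simp
qed

lemma lincomb_sub_cspan:
  assumes T': "T' \<subseteq> L2 N" and sub: "T \<subseteq> cspan N T'"
  shows "lincomb T \<subseteq> cspan N T'"
proof
  fix h assume "h \<in> lincomb T"
  then obtain F c where F: "finite F" "F \<subseteq> T" "h = (\<lambda>g. \<Sum>v\<in>F. c v * v g)"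
    unfolding lincomb_def by blast
  have "(\<lambda>g. \<Sum>v\<in>F. c v * v g) \<in> cspan N T'"
    by (rule cspan_sum[OF T' F(1)]) (use F sub in blast)
  thus "h \<in> cspan N T'" using F by simp
qed

lemma cspan_trans:
  assumes T': "T' \<subseteq> L2 N" and sub: "T \<subseteq> cspan N T'"
  shows "cspan N T \<subseteq> cspan N T'"
proof
  fix f assume f: "f \<in> cspan N T"
  show "f \<in> cspan N T'"
  proof (rule cspanI)
    show "f \<in> L2 N" using f cspan_L2 by blast
    fix e :: real assume "e > 0"
    hence e2: "e/2 > 0" by simp
    obtain h where h: "h \<in> lincomb T" "nrm (\<lambda>g. f g - h g) < e/2"
      using cspanD[OF f e2] by blast
    have hc: "h \<in> cspan N T'" using lincomb_sub_cspan[OF T' sub] h(1) by blast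
    obtain h' where h': "h' \<in> lincomb T'" "nrm (\<lambda>g. h g - h' g) < e/2"
      using cspanD[OF hc e2] by blast
    have s: "square_summable f" "square_summable h" "square_summable h'"
      using f hc h' cspan_square_summable lincomb_square_summable[OF T'] by auto
    have "l2_norm (\<lambda>g. f g - h' g) \<le> l2_norm (\<lambda>g. f g - h g) + l2_norm (\<lambda>g. h g - h' g)"
      by (rule l2_norm_diff_triangle[OF s])
    hence "nrm (\<lambda>g. f g - h' g) < e" using h h' by (simp add: nrm_eq_l2_norm)
    thus "\<exists>h\<in>lincomb T'. nrm (\<lambda>g. f g - h g) < e" using h' by blast
  qed
qed

section \<open>Unconditional sums in \<open>\<ell>\<^sup>2(\<Gamma>)\<close>\<close>

lemma has_sum_finite_approx:
  fixes u :: "'a \<Rightarrow> real"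
  assumes "(u has_sum T) A" "e > 0"
  obtains F0 where "finite F0" "F0 \<subseteq> A" "\<And>F. finite F \<Longrightarrow> F0 \<subseteq> F \<Longrightarrow> F \<subseteq> A \<Longrightarrow> \<bar>sum u F - T\<bar> < e"
proof -
  have "eventually (\<lambda>F. dist (sum u F) T < e) (finite_subsets_at_top A)"
    using assms unfolding has_sum_def by (rule tendstoD)
  then obtain F0 where "finite F0" "F0 \<subseteq> A" "\<forall>F. finite F \<and> F0 \<subseteq> F \<and> F \<subseteq> A \<longrightarrow> dist (sum u F) T < e"
    unfolding eventually_finite_subsets_at_top by blast
  thus ?thesis using that by (simp add: dist_real_def)
qed

definition lin_comb :: "('i \<Rightarrow> 'a \<Rightarrow> complex) \<Rightarrow> 'i set \<Rightarrow> ('i \<Rightarrow> complex) \<Rightarrow> 'a \<Rightarrow> complex" where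
  "lin_comb v F c = (\<lambda>x. \<Sum>\<alpha>\<in>F. c \<alpha> * v \<alpha> x)"

lemma lin_comb_L2: "finite F \<Longrightarrow> v ` F \<subseteq> L2 N \<Longrightarrow> lin_comb v F c \<in> L2 N"
  unfolding lin_comb_def by (intro L2_sum L2_scale) auto

lemma lin_comb_square_summable:
  "finite F \<Longrightarrow> (\<And>\<alpha>. \<alpha> \<in> F \<Longrightarrow> square_summable (v \<alpha>)) \<Longrightarrow> square_summable (lin_comb v F c)"
  unfolding lin_comb_def by (intro square_summable_sum square_summable_scale)

lemma lin_comb_diff: "(\<lambda>x. lin_comb v F c x - lin_comb v F d x) = lin_comb v F (\<lambda>\<alpha>. c \<alpha> - d \<alpha>)"
  unfolding lin_comb_def by (rule ext) (simp add: sum_subtractf algebra_simps)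

lemma lin_comb_mono_neutral:
  "finite F \<Longrightarrow> F0 \<subseteq> F \<Longrightarrow> (\<And>\<alpha>. \<alpha> \<notin> F0 \<Longrightarrow> c \<alpha> = 0) \<Longrightarrow> lin_comb v F c = lin_comb v F0 c"
  unfolding lin_comb_def by (rule ext) (rule sum.mono_neutral_right, auto)

lemma lincomb_image_eq_lin_comb:
  assumes "h \<in> lincomb (v ` I)"
  shows "\<exists>F d. finite F \<and> F \<subseteq> I \<and> (\<forall>\<alpha>. \<alpha> \<notin> F \<longrightarrow> d \<alpha> = 0) \<and> h = lin_comb v F d"
proof -
  obtain U cu where U: "finite U" "U \<subseteq> v ` I" "h = (\<lambda>x. \<Sum>u\<in>U. cu u * u x)"
    using assms unfolding lincomb_def by blast
  define r where "r u = (SOME \<alpha>. \<alpha> \<in> I \<and> v \<alpha> = u)" for u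
  have r: "r u \<in> I \<and> v (r u) = u" if "u \<in> U" for u
  proof -
    have "\<exists>\<alpha>. \<alpha> \<in> I \<and> v \<alpha> = u" using U(2) that by blast
    thus ?thesis unfolding r_def by (rule someI_ex)
  qed
  have inj: "inj_on r U" by (rule inj_onI) (metis r)
  define F where "F = r ` U"
  define d where "d \<alpha> = (if \<alpha> \<in> F then cu (v \<alpha>) else 0)" for \<alpha>
  have "lin_comb v F d = h"
  proof
    fix x
    have "lin_comb v F d x = (\<Sum>u\<in>U. d (r u) * v (r u) x)"
      unfolding lin_comb_def F_def by (rule sum.reindex[OF inj, unfolded comp_def])
    also have "\<dots> = (\<Sum>u\<in>U. cu u * u x)"
      by (rule sum.cong) (auto simp: d_def F_def r)
    finally show "lin_comb v F d x = h x" using U by simp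
  qed
  moreover have "finite F" "F \<subseteq> I" using U r by (auto simp: F_def)
  ultimately show ?thesis by (intro exI[of _ F] exI[of _ d]) (auto simp: d_def)
qed

lemma has_sum_l2_iff_tendsto:
  "has_sum_l2 N w I x \<longleftrightarrow> x \<in> L2 N \<and>
     ((\<lambda>F. l2_norm (\<lambda>g. x g - (\<Sum>\<alpha>\<in>F. w \<alpha> g))) \<longlongrightarrow> 0) (finite_subsets_at_top I)"
  unfolding has_sum_l2_def tendsto_iff dist_real_def eventually_finite_subsets_at_top nrm_eq_l2_norm
  by (simp add: l2_norm_nonneg)

lemma has_sum_l2_finite_support:
  assumes "finite F" "F \<subseteq> I" "\<And>\<alpha>. \<alpha> \<notin> F \<Longrightarrow> d \<alpha> = 0" "lin_comb v F d \<in> L2 N"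
  shows "has_sum_l2 N (\<lambda>\<alpha> g. d \<alpha> * v \<alpha> g) I (lin_comb v F d)"
  unfolding has_sum_l2_def
proof (intro conjI allI impI exI[of _ F])
  fix e :: real and F' assume "e > 0" "finite F' \<and> F \<subseteq> F' \<and> F' \<subseteq> I"
  hence "lin_comb v F d = lin_comb v F' d" using assms by (intro lin_comb_mono_neutral[symmetric]) auto
  thus "nrm (\<lambda>g. lin_comb v F d g - (\<Sum>\<alpha>\<in>F'. d \<alpha> * v \<alpha> g)) < e"
    using \<open>e > 0\<close> by (simp add: lin_comb_def nrm_def)
qed (use assms in auto)

lemma has_sum_l2_diff:
  fixes w w' :: "'i \<Rightarrow> vec"
  assumes x: "has_sum_l2 N w I x" and y: "has_sum_l2 N w' I y"
    and L2: "\<And>\<alpha>. \<alpha> \<in> I \<Longrightarrow> w \<alpha> \<in> L2 N" "\<And>\<alpha>. \<alpha> \<in> I \<Longrightarrow> w' \<alpha> \<in> L2 N"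
  shows "has_sum_l2 N (\<lambda>\<alpha> g. w \<alpha> g - w' \<alpha> g) I (\<lambda>g. x g - y g)"
  unfolding has_sum_l2_iff_tendsto
proof
  have xy: "x \<in> L2 N" "y \<in> L2 N" using x y by (simp_all add: has_sum_l2_def)
  thus "(\<lambda>g. x g - y g) \<in> L2 N" by (rule L2_diff)
  define r where "r x w F = l2_norm (\<lambda>g. x g - (\<Sum>\<alpha>\<in>F. w \<alpha> g))"
    for x :: vec and w :: "'i \<Rightarrow> vec" and F
  have ev: "eventually (\<lambda>F. norm (r (\<lambda>g. x g - y g) (\<lambda>\<alpha> g. w \<alpha> g - w' \<alpha> g) F) \<le> r x w F + r y w' F)
      (finite_subsets_at_top I)"
  proof (rule eventually_finite_subsets_at_top_weakI)
    fix F assume F: "finite F" "F \<subseteq> I"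
    have sums: "(\<lambda>g. \<Sum>\<alpha>\<in>F. w \<alpha> g) \<in> L2 N" "(\<lambda>g. \<Sum>\<alpha>\<in>F. w' \<alpha> g) \<in> L2 N"
      using L2 F by (auto intro: L2_sum)
    note sq = L2_square_summable[OF L2_diff[OF xy(1) sums(1)]] L2_square_summable[OF L2_diff[OF xy(2) sums(2)]]
    have "(\<lambda>g. x g - y g - (\<Sum>\<alpha>\<in>F. w \<alpha> g - w' \<alpha> g))
        = (\<lambda>g. (x g - (\<Sum>\<alpha>\<in>F. w \<alpha> g)) - (y g - (\<Sum>\<alpha>\<in>F. w' \<alpha> g)))"
      by (rule ext, simp only: sum_subtractf) algebra
    with l2_norm_diff_le[OF sq]
    show "norm (r (\<lambda>g. x g - y g) (\<lambda>\<alpha> g. w \<alpha> g - w' \<alpha> g) F) \<le> r x w F + r y w' F"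
      by (simp add: r_def l2_norm_nonneg)
  qed
  have "((\<lambda>F. r x w F + r y w' F) \<longlongrightarrow> 0 + 0) (finite_subsets_at_top I)"
    using x y unfolding has_sum_l2_iff_tendsto r_def by (intro tendsto_add) blast+
  from Lim_null_comparison[OF ev this[unfolded add_0]]
  show "((\<lambda>F. l2_norm (\<lambda>g. x g - y g - (\<Sum>\<alpha>\<in>F. w \<alpha> g - w' \<alpha> g))) \<longlongrightarrow> 0) (finite_subsets_at_top I)"
    by (simp add: r_def)
qed

lemma has_sum_l2_sum_sq_tendsto:
  assumes x: "has_sum_l2 N w I x" and L2: "\<And>\<alpha>. \<alpha> \<in> I \<Longrightarrow> w \<alpha> \<in> L2 N"
  shows "((\<lambda>F. sum_sq (\<lambda>g. \<Sum>\<alpha>\<in>F. w \<alpha> g)) \<longlongrightarrow> sum_sq x) (finite_subsets_at_top I)"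
proof -
  have "eventually (\<lambda>F. norm (l2_norm (\<lambda>g. \<Sum>\<alpha>\<in>F. w \<alpha> g) - l2_norm x)
      \<le> l2_norm (\<lambda>g. x g - (\<Sum>\<alpha>\<in>F. w \<alpha> g))) (finite_subsets_at_top I)"
  proof (rule eventually_finite_subsets_at_top_weakI)
    fix F assume "finite F" "F \<subseteq> I"
    hence "square_summable (\<lambda>g. \<Sum>\<alpha>\<in>F. w \<alpha> g)" "square_summable x"
      using x L2 by (auto intro!: L2_square_summable L2_sum simp: has_sum_l2_def)
    from l2_norm_reverse_triangle[OF this]
    show "norm (l2_norm (\<lambda>g. \<Sum>\<alpha>\<in>F. w \<alpha> g) - l2_norm x) \<le> l2_norm (\<lambda>g. x g - (\<Sum>\<alpha>\<in>F. w \<alpha> g))"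
      by (simp add: l2_norm_diff_commute)
  qed
  moreover have "((\<lambda>F. l2_norm (\<lambda>g. x g - (\<Sum>\<alpha>\<in>F. w \<alpha> g))) \<longlongrightarrow> 0) (finite_subsets_at_top I)"
    using x by (simp only: has_sum_l2_iff_tendsto)
  ultimately have "((\<lambda>F. l2_norm (\<lambda>g. \<Sum>\<alpha>\<in>F. w \<alpha> g) - l2_norm x) \<longlongrightarrow> 0) (finite_subsets_at_top I)"
    by (rule Lim_null_comparison)
  hence "((\<lambda>F. l2_norm (\<lambda>g. \<Sum>\<alpha>\<in>F. w \<alpha> g)) \<longlongrightarrow> l2_norm x) (finite_subsets_at_top I)"
    by (simp only: LIM_zero_iff)
  from tendsto_power[OF this, of 2] show ?thesis by (simp only: l2_norm_power2)
qed

lemma L2_pointwise_limit: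
  assumes "\<And>k. f k \<in> L2 N" "\<And>g. (\<lambda>k. f k g) \<longlonglongrightarrow> y g" "square_summable y"
  shows "y \<in> L2 N"
  unfolding L2_iff
proof (intro conjI allI impI assms(3))
  fix g assume "g \<notin> Gam N"
  hence "f k g = 0" for k using assms(1) by (simp add: L2_iff)
  thus "y g = 0" using assms(2)[of g] by (simp add: LIMSEQ_const_iff)
qed

lemma LIMSEQ_one_over_Suc: "(\<lambda>k. c / real (Suc k)) \<longlonglongrightarrow> 0"
  using tendsto_mult_right_zero[OF LIMSEQ_inverse_real_of_nat, of c] by (simp add: divide_inverse)

lemma has_sum_l2_if_Cauchy:
  fixes w :: "'i \<Rightarrow> vec"
  assumes L2: "\<And>\<alpha>. \<alpha> \<in> I \<Longrightarrow> w \<alpha> \<in> L2 N"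
    and Cauchy: "\<And>e. e > 0 \<Longrightarrow> \<exists>F0. finite F0 \<and> F0 \<subseteq> I \<and>
      (\<forall>F. finite F \<longrightarrow> F \<subseteq> I - F0 \<longrightarrow> l2_norm (\<lambda>g. \<Sum>\<alpha>\<in>F. w \<alpha> g) < e)"
  shows "\<exists>x. has_sum_l2 N w I x"
proof -
  define S where "S F = (\<lambda>g. \<Sum>\<alpha>\<in>F. w \<alpha> g)" for F
  have S_L2: "finite F \<Longrightarrow> F \<subseteq> I \<Longrightarrow> S F \<in> L2 N" for F
    unfolding S_def using L2 by (auto intro: L2_sum)
  have S_split: "(\<lambda>g. S F g - S F0 g) = S (F - F0)" if "finite F" "F0 \<subseteq> F" for F F0
    unfolding S_def using that by (simp add: sum_diff)
  have "\<forall>k. \<exists>F0. finite F0 \<and> F0 \<subseteq> I \<and>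
      (\<forall>F. finite F \<longrightarrow> F \<subseteq> I - F0 \<longrightarrow> l2_norm (S F) < 1 / real (Suc k))"
    using Cauchy unfolding S_def by simp
  then obtain F0 where F0: "\<And>k. finite (F0 k)" "\<And>k. F0 k \<subseteq> I"
    "\<And>k F. finite F \<Longrightarrow> F \<subseteq> I - F0 k \<Longrightarrow> l2_norm (S F) < 1 / real (Suc k)"
    by metis
  define G where "G k = (\<Union>j\<le>k. F0 j)" for k
  have G: "finite (G k)" "G k \<subseteq> I" for k using F0 by (auto simp: G_def)
  have G_mono: "k \<le> j \<Longrightarrow> G k \<subseteq> G j" for k j unfolding G_def by (intro UN_mono) auto
  have tail: "l2_norm (S F) < 1 / real (Suc k)" if "finite F" "F \<subseteq> I - G k" for F k
    using F0(3)[OF that(1)] that(2) by (auto simp: G_def)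
  have rate: "l2_norm (\<lambda>g. S (G j) g - S (G k) g) \<le> 1 / real (Suc k)" if "k \<le> j" for j k
  proof -
    have "G j - G k \<subseteq> I - G k" using G(2)[of j] by blast
    thus ?thesis unfolding S_split[OF G(1) G_mono[OF that]] using G(1)[of j] tail[of "G j - G k" k] by simp
  qed
  obtain x where x: "square_summable x" "\<And>g. (\<lambda>k. S (G k) g) \<longlonglongrightarrow> x g"
      "\<And>k. l2_norm (\<lambda>g. x g - S (G k) g) \<le> 1 / real (Suc k)"
    using l2_limit_with_rate[OF L2_square_summable[OF S_L2[OF G]] LIMSEQ_one_over_Suc rate] by blast
  have "nrm (\<lambda>g. x g - S F g) < e" if "e > 0" "finite F" "G k \<subseteq> F" "F \<subseteq> I" "2 / real (Suc k) < e"
    for e F k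
  proof -
    have "x g - S F g = (x g - S (G k) g) - (S F g - S (G k) g)" for g by algebra
    hence "(\<lambda>g. x g - S F g) = (\<lambda>g. (x g - S (G k) g) - S (F - G k) g)"
      unfolding S_split[OF that(2,3), symmetric] by simp
    moreover have "l2_norm (\<lambda>g. (x g - S (G k) g) - S (F - G k) g)
        \<le> l2_norm (\<lambda>g. x g - S (G k) g) + l2_norm (S (F - G k))"
      using that G by (intro l2_norm_diff_le square_summable_diff x(1) L2_square_summable[OF S_L2]) auto
    moreover have "l2_norm (S (F - G k)) < 1 / real (Suc k)" using that by (intro tail) auto
    ultimately show ?thesis using x(3)[of k] that(5) unfolding nrm_eq_l2_norm by simp
  qed
  moreover have "\<exists>k. 2 / real (Suc k) < e" if "e > 0" for e
    using LIMSEQ_D[OF LIMSEQ_one_over_Suc[of 2] that] by auto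
  ultimately have "has_sum_l2 N w I x"
    unfolding has_sum_l2_def S_def
    using L2_pointwise_limit[OF S_L2[OF G] x(2,1)] G by (meson order_refl)
  thus ?thesis by blast
qed

section \<open>Riesz sequences\<close>

definition riesz_bounds :: "('i \<Rightarrow> 'a \<Rightarrow> complex) \<Rightarrow> 'i set \<Rightarrow> real \<Rightarrow> real \<Rightarrow> bool" where
  "riesz_bounds v I a b \<longleftrightarrow> 0 < a \<and> a \<le> b \<and> (\<forall>\<alpha>\<in>I. square_summable (v \<alpha>)) \<and>
     (\<forall>F c. finite F \<longrightarrow> F \<subseteq> I \<longrightarrow>
        a * (\<Sum>\<alpha>\<in>F. (cmod (c \<alpha>))^2) \<le> sum_sq (lin_comb v F c) \<and>
        sum_sq (lin_comb v F c) \<le> b * (\<Sum>\<alpha>\<in>F. (cmod (c \<alpha>))^2))"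

context
  fixes N :: nat and v :: "'i \<Rightarrow> vec" and I :: "'i set" and ra rb :: real
  assumes riesz: "riesz_bounds v I ra rb" and v_L2: "v ` I \<subseteq> L2 N"
begin

private lemma riesz_constants: "0 < ra" "ra \<le> rb"
  using riesz by (simp_all add: riesz_bounds_def)

private lemma comb_bounds:
  assumes "finite F" "F \<subseteq> I"
  shows "ra * (\<Sum>\<alpha>\<in>F. (cmod (c \<alpha>))^2) \<le> sum_sq (\<lambda>g. \<Sum>\<alpha>\<in>F. c \<alpha> * v \<alpha> g)"
    "sum_sq (\<lambda>g. \<Sum>\<alpha>\<in>F. c \<alpha> * v \<alpha> g) \<le> rb * (\<Sum>\<alpha>\<in>F. (cmod (c \<alpha>))^2)"
  using riesz assms by (simp_all add: riesz_bounds_def lin_comb_def)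

private lemma scaled_L2: "\<alpha> \<in> I \<Longrightarrow> (\<lambda>g. c \<alpha> * v \<alpha> g) \<in> L2 N"
  using v_L2 by (auto intro: L2_scale)

private lemma comb_L2: "finite F \<Longrightarrow> F \<subseteq> I \<Longrightarrow> lin_comb v F c \<in> L2 N"
  using v_L2 by (intro lin_comb_L2) auto

lemma riesz_bounds_sum_sq_bounds:
  assumes x: "has_sum_l2 N (\<lambda>\<alpha> g. c \<alpha> * v \<alpha> g) I x" and c: "sq_summable c I"
  shows "ra * infsum (\<lambda>\<alpha>. (cmod (c \<alpha>))^2) I \<le> sum_sq x"
    "sum_sq x \<le> rb * infsum (\<lambda>\<alpha>. (cmod (c \<alpha>))^2) I"
proof -
  let ?F = "finite_subsets_at_top I"
  have partial: "((\<lambda>F. sum_sq (\<lambda>g. \<Sum>\<alpha>\<in>F. c \<alpha> * v \<alpha> g)) \<longlongrightarrow> sum_sq x) ?F"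
    by (rule has_sum_l2_sum_sq_tendsto[OF x scaled_L2[of _ c]])
  have "((\<lambda>F. \<Sum>\<alpha>\<in>F. (cmod (c \<alpha>))^2) \<longlongrightarrow> infsum (\<lambda>\<alpha>. (cmod (c \<alpha>))^2) I) ?F"
    using c unfolding sq_summable_def summable_iff_has_sum_infsum has_sum_def .
  hence coeffs: "((\<lambda>F. r * (\<Sum>\<alpha>\<in>F. (cmod (c \<alpha>))^2)) \<longlongrightarrow> r * infsum (\<lambda>\<alpha>. (cmod (c \<alpha>))^2) I) ?F"
    for r by (intro tendsto_mult tendsto_const)
  show "ra * infsum (\<lambda>\<alpha>. (cmod (c \<alpha>))^2) I \<le> sum_sq x"
    using comb_bounds(1) by (intro tendsto_le[OF finite_subsets_at_top_neq_bot partial coeffs]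
      eventually_finite_subsets_at_top_weakI)
  show "sum_sq x \<le> rb * infsum (\<lambda>\<alpha>. (cmod (c \<alpha>))^2) I"
    using comb_bounds(2) by (intro tendsto_le[OF finite_subsets_at_top_neq_bot coeffs partial]
      eventually_finite_subsets_at_top_weakI)
qed

lemma riesz_bounds_synthesis:
  assumes c: "sq_summable c I"
  shows "\<exists>x. has_sum_l2 N (\<lambda>\<alpha> g. c \<alpha> * v \<alpha> g) I x \<and>
     ra * infsum (\<lambda>\<alpha>. (cmod (c \<alpha>))^2) I \<le> (nrm x)^2 \<and> (nrm x)^2 \<le> rb * infsum (\<lambda>\<alpha>. (cmod (c \<alpha>))^2) I"
proof -
  define u where "u \<alpha> = (cmod (c \<alpha>))^2" for \<alpha>
  have u: "(u has_sum infsum u I) I"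
    using c unfolding sq_summable_def u_def[abs_def] by (simp add: summable_iff_has_sum_infsum)
  have "\<exists>x. has_sum_l2 N (\<lambda>\<alpha> g. c \<alpha> * v \<alpha> g) I x"
  proof (rule has_sum_l2_if_Cauchy[OF scaled_L2[of _ c]])
    fix e :: real assume e: "e > 0"
    have \<delta>: "e^2 / (2 * rb) > 0" using e riesz_constants by simp
    obtain F0 where F0: "finite F0" "F0 \<subseteq> I"
      "\<And>F. finite F \<Longrightarrow> F0 \<subseteq> F \<Longrightarrow> F \<subseteq> I \<Longrightarrow> \<bar>sum u F - infsum u I\<bar> < e^2 / (2 * rb)"
      using has_sum_finite_approx[OF u \<delta>] by blast
    have "l2_norm (\<lambda>g. \<Sum>\<alpha>\<in>F. c \<alpha> * v \<alpha> g) < e" if F: "finite F" "F \<subseteq> I - F0" for F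
    proof -
      have FI: "F \<subseteq> I" using F by blast
      have "\<bar>sum u (F \<union> F0) - infsum u I\<bar> < e^2 / (2 * rb)" "\<bar>sum u F0 - infsum u I\<bar> < e^2 / (2 * rb)"
        using F(1) FI F0 by (intro F0(3); simp)+
      moreover have "sum u F = sum u (F \<union> F0) - sum u F0"
        using F F0 by (subst sum.union_disjoint) auto
      ultimately have "sum u F < e^2 / rb" by simp
      hence "rb * sum u F < e^2" using riesz_constants by (simp add: pos_less_divide_eq mult.commute)
      moreover have "sum_sq (\<lambda>g. \<Sum>\<alpha>\<in>F. c \<alpha> * v \<alpha> g) \<le> rb * sum u F"
        unfolding u_def by (rule comb_bounds(2)[OF F(1) FI])
      ultimately have "(l2_norm (\<lambda>g. \<Sum>\<alpha>\<in>F. c \<alpha> * v \<alpha> g))^2 < e^2"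
        unfolding l2_norm_power2 by linarith
      from power_less_imp_less_base[OF this] e show ?thesis by simp
    qed
    thus "\<exists>F0. finite F0 \<and> F0 \<subseteq> I \<and>
        (\<forall>F. finite F \<longrightarrow> F \<subseteq> I - F0 \<longrightarrow> l2_norm (\<lambda>g. \<Sum>\<alpha>\<in>F. c \<alpha> * v \<alpha> g) < e)"
      using F0 by blast
  qed
  then obtain x where x: "has_sum_l2 N (\<lambda>\<alpha> g. c \<alpha> * v \<alpha> g) I x" ..
  thus ?thesis
    using riesz_bounds_sum_sq_bounds[OF x c] by (auto simp: nrm_eq_l2_norm l2_norm_power2)
qed

private lemma coefficient_bound:
  assumes x: "has_sum_l2 N (\<lambda>\<alpha> g. c \<alpha> * v \<alpha> g) I x" and \<alpha>: "\<alpha> \<in> I"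
  shows "ra * (cmod (c \<alpha>))^2 \<le> sum_sq x"
proof (rule tendsto_le[OF finite_subsets_at_top_neq_bot has_sum_l2_sum_sq_tendsto[OF x scaled_L2[of _ c]]
      tendsto_const])
  have "ra * (cmod (c \<alpha>))^2 \<le> sum_sq (\<lambda>g. \<Sum>\<beta>\<in>F. c \<beta> * v \<beta> g)"
    if "finite F" "{\<alpha>} \<subseteq> F" "F \<subseteq> I" for F
  proof -
    have "(cmod (c \<alpha>))^2 \<le> (\<Sum>\<beta>\<in>F. (cmod (c \<beta>))^2)" using that by (intro member_le_sum) auto
    hence "ra * (cmod (c \<alpha>))^2 \<le> ra * (\<Sum>\<beta>\<in>F. (cmod (c \<beta>))^2)"
      using riesz_constants by (intro mult_left_mono) auto
    also have "\<dots> \<le> sum_sq (\<lambda>g. \<Sum>\<beta>\<in>F. c \<beta> * v \<beta> g)" using that by (intro comb_bounds(1)) auto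
    finally show ?thesis .
  qed
  thus "\<forall>\<^sub>F F in finite_subsets_at_top I. ra * (cmod (c \<alpha>))^2 \<le> sum_sq (\<lambda>g. \<Sum>\<beta>\<in>F. c \<beta> * v \<beta> g)"
    unfolding eventually_finite_subsets_at_top using \<alpha> by blast
qed

lemma riesz_bounds_expansion_unique:
  assumes b: "has_sum_l2 N (\<lambda>\<alpha> g. b \<alpha> * v \<alpha> g) I x" and b': "has_sum_l2 N (\<lambda>\<alpha> g. b' \<alpha> * v \<alpha> g) I x"
    and outside: "\<forall>\<alpha>. \<alpha> \<notin> I \<longrightarrow> b \<alpha> = 0" "\<forall>\<alpha>. \<alpha> \<notin> I \<longrightarrow> b' \<alpha> = 0"
  shows "b = b'"
proof
  fix \<alpha>
  show "b \<alpha> = b' \<alpha>"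
  proof (cases "\<alpha> \<in> I")
    case True
    have "has_sum_l2 N (\<lambda>\<beta> g. b \<beta> * v \<beta> g - b' \<beta> * v \<beta> g) I (\<lambda>g. x g - x g)"
      using b b' by (rule has_sum_l2_diff) (use scaled_L2 in auto)
    hence "has_sum_l2 N (\<lambda>\<beta> g. (b \<beta> - b' \<beta>) * v \<beta> g) I (\<lambda>g. 0)"
      by (simp add: left_diff_distrib)
    from coefficient_bound[OF this True] have "ra * (cmod (b \<alpha> - b' \<alpha>))^2 \<le> 0"
      by (simp add: sum_sq_def)
    thus ?thesis using riesz_constants by (simp add: mult_le_0_iff)
  qed (use outside in simp)
qed

private lemma l2_norm_sub_finite_combination:
  assumes b: "square_summable b" "\<forall>\<alpha>. \<alpha> \<notin> I \<longrightarrow> b \<alpha> = 0"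
    and y: "has_sum_l2 N (\<lambda>\<alpha> g. b \<alpha> * v \<alpha> g) I y"
    and d: "finite F" "F \<subseteq> I" "\<And>\<alpha>. \<alpha> \<notin> F \<Longrightarrow> d \<alpha> = 0"
  shows "l2_norm (\<lambda>g. y g - lin_comb v F d g) \<le> sqrt rb * l2_norm (\<lambda>\<alpha>. b \<alpha> - d \<alpha>)"
proof -
  have "has_sum_l2 N (\<lambda>\<alpha> g. b \<alpha> * v \<alpha> g - d \<alpha> * v \<alpha> g) I (\<lambda>g. y g - lin_comb v F d g)"
    using y has_sum_l2_finite_support[OF d comb_L2[OF d(1,2)]]
    by (rule has_sum_l2_diff) (use scaled_L2 in auto)
  hence diff: "has_sum_l2 N (\<lambda>\<alpha> g. (b \<alpha> - d \<alpha>) * v \<alpha> g) I (\<lambda>g. y g - lin_comb v F d g)"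
    by (simp add: left_diff_distrib)
  have bd: "square_summable (\<lambda>\<alpha>. b \<alpha> - d \<alpha>)"
    using b(1) square_summable_finite_support[OF d(1,3)] by (rule square_summable_diff)
  hence "sq_summable (\<lambda>\<alpha>. b \<alpha> - d \<alpha>) I"
    unfolding sq_summable_def by (rule summable_on_subset_banach) simp
  from riesz_bounds_sum_sq_bounds(2)[OF diff this]
  have "sum_sq (\<lambda>g. y g - lin_comb v F d g) \<le> rb * infsum (\<lambda>\<alpha>. (cmod (b \<alpha> - d \<alpha>))^2) I" .
  also have "infsum (\<lambda>\<alpha>. (cmod (b \<alpha> - d \<alpha>))^2) I = sum_sq (\<lambda>\<alpha>. b \<alpha> - d \<alpha>)"
    unfolding sum_sq_def using b(2) d(2,3) by (intro infsum_cong_neutral) auto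
  finally show ?thesis
    by (simp add: l2_norm_def real_sqrt_mult[symmetric] real_sqrt_le_mono)
qed

private lemma l2_norm_finite_combination_lower:
  assumes "finite F" "F \<subseteq> I" "\<And>\<alpha>. \<alpha> \<notin> F \<Longrightarrow> d \<alpha> = 0"
  shows "sqrt ra * l2_norm d \<le> l2_norm (lin_comb v F d)"
proof -
  have "ra * sum_sq d \<le> sum_sq (lin_comb v F d)"
    using comb_bounds(1)[OF assms(1,2), of d] sum_sq_finite_support[OF assms(1,3)]
    by (simp add: lin_comb_def)
  thus ?thesis by (simp add: l2_norm_def real_sqrt_mult[symmetric] real_sqrt_le_mono)
qed

private lemma cspan_finite_approximations:
  assumes x: "x \<in> cspan N (v ` I)"
  shows "\<exists>F d. \<forall>k. finite (F k) \<and> F k \<subseteq> I \<and> (\<forall>\<alpha>. \<alpha> \<notin> F k \<longrightarrow> d k \<alpha> = 0) \<and>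
    l2_norm (\<lambda>g. x g - lin_comb v (F k) (d k) g) < 1 / real (Suc k)"
proof -
  have "\<exists>F d. finite F \<and> F \<subseteq> I \<and> (\<forall>\<alpha>. \<alpha> \<notin> F \<longrightarrow> d \<alpha> = 0) \<and>
      l2_norm (\<lambda>g. x g - lin_comb v F d g) < 1 / real (Suc k)" for k
  proof -
    obtain h where h: "h \<in> lincomb (v ` I)" "nrm (\<lambda>g. x g - h g) < 1 / real (Suc k)"
      using cspanD[OF x, of "1 / real (Suc k)"] by auto
    thus ?thesis using lincomb_image_eq_lin_comb[OF h(1)] by (auto simp: nrm_eq_l2_norm)
  qed
  thus ?thesis by metis
qed

lemma riesz_bounds_expansion_exists:
  assumes x: "x \<in> cspan N (v ` I)"
  shows "\<exists>b. (\<forall>\<alpha>. \<alpha> \<notin> I \<longrightarrow> b \<alpha> = 0) \<and> square_summable b \<and>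
    has_sum_l2 N (\<lambda>\<alpha> g. b \<alpha> * v \<alpha> g) I x"
proof -
  obtain F d where F: "\<And>k. finite (F k)" "\<And>k. F k \<subseteq> I" "\<And>k \<alpha>. \<alpha> \<notin> F k \<Longrightarrow> d k \<alpha> = 0"
    and approx: "\<And>k. l2_norm (\<lambda>g. x g - lin_comb v (F k) (d k) g) < 1 / real (Suc k)"
    using cspan_finite_approximations[OF x] by blast
  define h where "h k = lin_comb v (F k) (d k)" for k
  define C where "C = 2 / sqrt ra"
  have x_sq: "square_summable x" using cspan_square_summable[OF x] .
  have h_sq: "square_summable (h k)" for k unfolding h_def by (rule L2_square_summable[OF comb_L2[OF F(1,2)]])
  have d_sq: "square_summable (d k)" for k by (rule square_summable_finite_support[OF F(1,3)])
  have rate: "l2_norm (\<lambda>\<alpha>. d j \<alpha> - d k \<alpha>) \<le> C / real (Suc k)" if "k \<le> j" for j k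
  proof -
    have U: "finite (F j \<union> F k)" "F j \<union> F k \<subseteq> I" using F by auto
    have "(\<lambda>g. h j g - h k g) = lin_comb v (F j \<union> F k) (\<lambda>\<alpha>. d j \<alpha> - d k \<alpha>)"
      unfolding h_def lin_comb_diff[symmetric] using U F(3)
      by (simp add: lin_comb_mono_neutral[of "F j \<union> F k" "F j"] lin_comb_mono_neutral[of "F j \<union> F k" "F k"])
    moreover have "sqrt ra * l2_norm (\<lambda>\<alpha>. d j \<alpha> - d k \<alpha>)
        \<le> l2_norm (lin_comb v (F j \<union> F k) (\<lambda>\<alpha>. d j \<alpha> - d k \<alpha>))"
      using U F(3) by (intro l2_norm_finite_combination_lower) auto
    ultimately have "sqrt ra * l2_norm (\<lambda>\<alpha>. d j \<alpha> - d k \<alpha>) \<le> l2_norm (\<lambda>g. h j g - h k g)"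
      by simp
    also have "\<dots> \<le> l2_norm (\<lambda>g. h j g - x g) + l2_norm (\<lambda>g. x g - h k g)"
      by (rule l2_norm_diff_triangle[OF h_sq x_sq h_sq])
    also have "\<dots> \<le> 1 / real (Suc j) + 1 / real (Suc k)"
      using approx[of j] approx[of k] l2_norm_diff_commute[of "h j" x] by (simp add: h_def)
    also have "\<dots> \<le> 2 / real (Suc k)"
      using that frac_le[of 1 1 "real (Suc k)" "real (Suc j)"] by simp
    finally have "l2_norm (\<lambda>\<alpha>. d j \<alpha> - d k \<alpha>) \<le> (2 / real (Suc k)) / sqrt ra"
      using riesz_constants by (simp add: pos_le_divide_eq mult.commute mult.left_commute)
    thus ?thesis by (simp add: C_def mult.commute)
  qed
  obtain b where b: "square_summable b" "\<And>\<alpha>. (\<lambda>k. d k \<alpha>) \<longlonglongrightarrow> b \<alpha>"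
      "\<And>k. l2_norm (\<lambda>\<alpha>. b \<alpha> - d k \<alpha>) \<le> C / real (Suc k)"
    using l2_limit_with_rate[OF d_sq LIMSEQ_one_over_Suc rate] by blast
  have b_outside: "\<forall>\<alpha>. \<alpha> \<notin> I \<longrightarrow> b \<alpha> = 0"
  proof (intro allI impI)
    fix \<alpha> assume "\<alpha> \<notin> I"
    hence "d k \<alpha> = 0" for k using F(2,3) by blast
    thus "b \<alpha> = 0" using b(2)[of \<alpha>] by (simp add: LIMSEQ_const_iff)
  qed
  have "sq_summable b I"
    using b(1) unfolding sq_summable_def by (rule summable_on_subset_banach) simp
  then obtain y where y: "has_sum_l2 N (\<lambda>\<alpha> g. b \<alpha> * v \<alpha> g) I y"
    using riesz_bounds_synthesis[of b] by blast
  have y_sq: "square_summable y" using y unfolding has_sum_l2_def by (blast intro: L2_square_summable)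
  have "l2_norm (\<lambda>g. x g - y g) \<le> (1 + sqrt rb * C) / real (Suc k)" for k
  proof -
    have "l2_norm (\<lambda>g. x g - y g) \<le> l2_norm (\<lambda>g. x g - h k g) + l2_norm (\<lambda>g. h k g - y g)"
      by (rule l2_norm_diff_triangle[OF x_sq h_sq y_sq])
    also have "l2_norm (\<lambda>g. h k g - y g) \<le> sqrt rb * l2_norm (\<lambda>\<alpha>. b \<alpha> - d k \<alpha>)"
      unfolding h_def l2_norm_diff_commute[of "lin_comb v _ _"]
      by (rule l2_norm_sub_finite_combination[OF b(1) b_outside y F(1,2,3)])
    also have "\<dots> \<le> sqrt rb * (C / real (Suc k))"
      using b(3)[of k] riesz_constants by (intro mult_left_mono) auto
    finally show ?thesis using approx[of k] by (simp add: h_def add_divide_distrib)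
  qed
  hence "l2_norm (\<lambda>g. x g - y g) \<le> 0"
    by (intro LIMSEQ_le_const[OF LIMSEQ_one_over_Suc]) auto
  hence "x = y"
    using norm_le_l2_norm[OF square_summable_diff[OF x_sq y_sq]]
    by (metis (no_types) eq_iff_diff_eq_0 ext norm_le_zero_iff order.trans)
  thus ?thesis using b(1) b_outside y by blast
qed

lemma riesz_basis_if_riesz_bounds:
  assumes "cspan N (v ` I) = H"
  shows "riesz_basis N v I H"
  unfolding riesz_basis_def
proof (intro conjI ballI)
  fix \<alpha> assume "\<alpha> \<in> I"
  hence "v \<alpha> \<in> lincomb (v ` I)" by (intro lincomb_mem) auto
  thus "v \<alpha> \<in> H" using lincomb_cspan[OF v_L2] assms by blast
next
  show "\<exists>a b. 0 < a \<and> a \<le> b \<and> (\<forall>c. sq_summable c I \<longrightarrow>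
      (\<exists>x. has_sum_l2 N (\<lambda>\<alpha> g. c \<alpha> * v \<alpha> g) I x \<and>
           a * infsum (\<lambda>\<alpha>. (cmod (c \<alpha>))^2) I \<le> (nrm x)^2 \<and>
           (nrm x)^2 \<le> b * infsum (\<lambda>\<alpha>. (cmod (c \<alpha>))^2) I))"
    using riesz_bounds_synthesis riesz_constants by blast
qed (fact assms)

lemma riesz_bounds_unique_expansion:
  assumes "x \<in> cspan N (v ` I)"
  shows "\<exists>!b. (\<forall>\<alpha>. \<alpha> \<notin> I \<longrightarrow> b \<alpha> = 0) \<and> sq_summable b I \<and>
    has_sum_l2 N (\<lambda>\<alpha> g. b \<alpha> * v \<alpha> g) I x"
proof -
  obtain b where b: "\<forall>\<alpha>. \<alpha> \<notin> I \<longrightarrow> b \<alpha> = 0" "square_summable b"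
      "has_sum_l2 N (\<lambda>\<alpha> g. b \<alpha> * v \<alpha> g) I x"
    using riesz_bounds_expansion_exists[OF assms] by blast
  have "sq_summable b I"
    using b(2) unfolding sq_summable_def by (rule summable_on_subset_banach) simp
  thus ?thesis
    using b riesz_bounds_expansion_unique by (intro ex1I[of _ b]) blast+
qed

end

lemma riesz_bounds_transfer:
  assumes v: "riesz_bounds v I a b" and w: "\<And>\<alpha>. \<alpha> \<in> I \<Longrightarrow> square_summable (w \<alpha>)" and B: "1 \<le> B"
    and wv: "\<And>F c. finite F \<Longrightarrow> F \<subseteq> I \<Longrightarrow> l2_norm (lin_comb w F c) \<le> B * l2_norm (lin_comb v F c)"
    and vw: "\<And>F c. finite F \<Longrightarrow> F \<subseteq> I \<Longrightarrow> l2_norm (lin_comb v F c) \<le> B * l2_norm (lin_comb w F c)"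
  shows "riesz_bounds w I (a / B^2) (B^2 * b)"
  unfolding riesz_bounds_def
proof (intro conjI ballI allI impI)
  have ab: "0 < a" "a \<le> b" using v by (simp_all add: riesz_bounds_def)
  have B2: "1 \<le> B^2" using B by (simp add: one_le_power)
  show "0 < a / B^2" using ab B by simp
  have "a / B^2 \<le> a" using ab B2 by (simp add: divide_le_eq mult_le_cancel_left1)
  also have "\<dots> \<le> B^2 * b" using ab B2 by (metis dual_order.trans mult_le_cancel_right1 less_le_not_le)
  finally show "a / B^2 \<le> B^2 * b" .
  show "square_summable (w \<alpha>)" if "\<alpha> \<in> I" for \<alpha> using w that .
  fix F c assume F: "finite F" "F \<subseteq> I"
  let ?s = "\<Sum>\<alpha>\<in>F. (cmod (c \<alpha>))^2"
  have bounds: "a * ?s \<le> sum_sq (lin_comb v F c)" "sum_sq (lin_comb v F c) \<le> b * ?s"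
    using v F by (simp_all add: riesz_bounds_def)
  have "sum_sq (lin_comb w F c) = (l2_norm (lin_comb w F c))^2" by (simp add: l2_norm_power2)
  also have "\<dots> \<le> (B * l2_norm (lin_comb v F c))^2" by (rule power_mono[OF wv[OF F] l2_norm_nonneg])
  also have "\<dots> = B^2 * sum_sq (lin_comb v F c)" by (simp add: power_mult_distrib l2_norm_power2)
  also have "\<dots> \<le> B^2 * (b * ?s)" using bounds(2) by (intro mult_left_mono) auto
  finally show "sum_sq (lin_comb w F c) \<le> B^2 * b * ?s" by (simp add: mult.assoc)
  have "a * ?s \<le> (l2_norm (lin_comb v F c))^2" using bounds(1) by (simp add: l2_norm_power2)
  also have "\<dots> \<le> (B * l2_norm (lin_comb w F c))^2" by (rule power_mono[OF vw[OF F] l2_norm_nonneg])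
  also have "\<dots> = B^2 * sum_sq (lin_comb w F c)" by (simp add: power_mult_distrib l2_norm_power2)
  finally show "a / B^2 * ?s \<le> sum_sq (lin_comb w F c)"
    using B2 by (simp add: divide_le_eq mult.commute sum_sq_nonneg)
qed

lemma riesz_bounds_orthogonal_sum:
  fixes v :: "'j \<times> 'k \<Rightarrow> 'a \<Rightarrow> complex"
  assumes J: "J \<noteq> {}" and slices: "\<And>i. i \<in> J \<Longrightarrow> riesz_bounds (\<lambda>x. v (i, x)) UNIV a b"
    and sub: "\<And>i G c. i \<in> J \<Longrightarrow> finite G \<Longrightarrow> lin_comb (\<lambda>x. v (i, x)) G c \<in> H i"
    and orth: "\<And>i j x y. i \<in> J \<Longrightarrow> j \<in> J \<Longrightarrow> i \<noteq> j \<Longrightarrow> x \<in> H i \<Longrightarrow> y \<in> H j \<Longrightarrow> l2_inner x y = 0"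
  shows "riesz_bounds v (J \<times> UNIV) a b"
  unfolding riesz_bounds_def
proof (intro conjI ballI allI impI)
  show "0 < a" "a \<le> b" using J slices by (auto simp: riesz_bounds_def)
  show "square_summable (v \<alpha>)" if "\<alpha> \<in> J \<times> UNIV" for \<alpha>
    using that slices[of "fst \<alpha>"] by (auto simp: riesz_bounds_def)
  fix F :: "('j \<times> 'k) set" and c assume F: "finite F" "F \<subseteq> J \<times> UNIV"
  define K where "K = fst ` F"
  define G where "G i = {x. (i, x) \<in> F}" for i
  have K: "finite K" "K \<subseteq> J" using F by (auto simp: K_def)
  have G: "finite (G i)" for i
    using F(1) by (rule finite_subset[rotated, OF finite_imageI]) (force simp: G_def)
  have sum_F: "(\<Sum>\<alpha>\<in>F. f \<alpha>) = (\<Sum>i\<in>K. \<Sum>x\<in>G i. f (i, x))" for f :: "_ \<Rightarrow> 'z::comm_monoid_add"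
  proof -
    have "F = Sigma K G" by (force simp: K_def G_def)
    thus ?thesis using K(1) G by (simp add: sum.Sigma)
  qed
  define E where "E i = lin_comb (\<lambda>x. v (i, x)) (G i) (\<lambda>x. c (i, x))" for i
  have "lin_comb v F c = (\<lambda>g. \<Sum>i\<in>K. E i g)"
    by (rule ext) (simp add: lin_comb_def E_def sum_F)
  moreover have E: "square_summable (E i)" if "i \<in> K" for i
    using slices[of i] K that unfolding E_def riesz_bounds_def by (intro lin_comb_square_summable G) auto
  moreover have "l2_inner (E i) (E j) = 0" if "i \<in> K" "j \<in> K" "i \<noteq> j" for i j
    using that K unfolding E_def by (intro orth[of i j] sub G) auto
  ultimately have pythagoras: "sum_sq (lin_comb v F c) = (\<Sum>i\<in>K. sum_sq (E i))"
    using K by (simp add: sum_sq_orthogonal_sum)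
  have bounds: "a * (\<Sum>x\<in>G i. (cmod (c (i, x)))^2) \<le> sum_sq (E i)"
      "sum_sq (E i) \<le> b * (\<Sum>x\<in>G i. (cmod (c (i, x)))^2)" if "i \<in> K" for i
    using slices[of i] K that G unfolding E_def riesz_bounds_def by auto
  have split: "r * (\<Sum>\<alpha>\<in>F. (cmod (c \<alpha>))^2) = (\<Sum>i\<in>K. r * (\<Sum>x\<in>G i. (cmod (c (i, x)))^2))"
    for r by (simp add: sum_F sum_distrib_left)
  show "a * (\<Sum>\<alpha>\<in>F. (cmod (c \<alpha>))^2) \<le> sum_sq (lin_comb v F c)"
    unfolding pythagoras split by (rule sum_mono) (rule bounds(1))
  show "sum_sq (lin_comb v F c) \<le> b * (\<Sum>\<alpha>\<in>F. (cmod (c \<alpha>))^2)"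
    unfolding pythagoras split by (rule sum_mono) (rule bounds(2))
qed

section \<open>A bimodule with an orthonormal basis\<close>

lemma
  fixes u w :: "'a \<Rightarrow> complex"
  assumes u: "square_summable u" and h: "inj h" and w: "\<And>p. cmod (w p) \<le> cmod (u (h p))"
    and t: "0 \<le> t"
  shows square_summable_perturbation: "square_summable (\<lambda>p. u p - of_real t * w p)"
    and l2_norm_perturbation_lower: "(1 - t) * l2_norm u \<le> l2_norm (\<lambda>p. u p - of_real t * w p)"
    and l2_norm_perturbation_upper: "l2_norm (\<lambda>p. u p - of_real t * w p) \<le> (1 + t) * l2_norm u"
proof -
  have uh: "square_summable (\<lambda>p. u (h p))" "l2_norm (\<lambda>p. u (h p)) \<le> l2_norm u"
    using square_summable_comp_inj[OF h u] l2_norm_comp_inj[OF h u] .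
  have ws: "square_summable w" "l2_norm w \<le> l2_norm (\<lambda>p. u (h p))"
    using square_summable_dominated[OF w uh(1)] l2_norm_dominated[OF w uh(1)] .
  have tw: "square_summable (\<lambda>p. of_real t * w p)" "l2_norm (\<lambda>p. of_real t * w p) = t * l2_norm w"
    using square_summable_scale[OF ws(1)] l2_norm_scale[OF ws(1)] t by auto
  have tw_le: "t * l2_norm w \<le> t * l2_norm u" using ws(2) uh(2) t by (simp add: mult_left_mono)
  show s: "square_summable (\<lambda>p. u p - of_real t * w p)" by (rule square_summable_diff[OF u tw(1)])
  have "l2_norm u \<le> l2_norm (\<lambda>p. u p - of_real t * w p) + l2_norm (\<lambda>p. of_real t * w p)"
    using l2_norm_triangle[OF s tw(1)] by simp
  thus "(1 - t) * l2_norm u \<le> l2_norm (\<lambda>p. u p - of_real t * w p)"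
    using tw(2) tw_le by (simp add: algebra_simps)
  have "l2_norm (\<lambda>p. u p - of_real t * w p) \<le> l2_norm u + t * l2_norm w"
    using l2_norm_diff_le[OF u tw(1)] tw(2) by simp
  thus "l2_norm (\<lambda>p. u p - of_real t * w p) \<le> (1 + t) * l2_norm u"
    using tw_le by (simp add: algebra_simps)
qed

definition two_shift :: "complex \<Rightarrow> (int \<times> int \<Rightarrow> complex) \<Rightarrow> int \<times> int \<Rightarrow> complex" where
  "two_shift t c p = c p - t * (c (p + (0, 2)) + c (p + (2, 0))) + t^2 * c (p + (2, 2))"

definition quadrant_part :: "(int \<times> int \<Rightarrow> complex) \<Rightarrow> int \<times> int \<Rightarrow> complex" where
  "quadrant_part c p = (if 0 \<le> fst p \<and> 0 \<le> snd p then c p else 0)"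

lemma sum_translate:
  fixes c Y :: "'a::ab_group_add \<Rightarrow> complex"
  assumes S: "finite S" "(\<lambda>p. p - s) ` G \<subseteq> S" and c: "\<And>p. p \<notin> G \<Longrightarrow> c p = 0"
  shows "(\<Sum>p\<in>G. c p * Y (p - s)) = (\<Sum>q\<in>S. c (q + s) * Y q)"
proof -
  have "(\<Sum>p\<in>G. c p * Y (p - s)) = (\<Sum>q\<in>(\<lambda>p. p - s) ` G. c (q + s) * Y q)"
    by (subst sum.reindex) (auto simp: inj_on_def)
  also have "\<dots> = (\<Sum>q\<in>S. c (q + s) * Y q)"
  proof (rule sum.mono_neutral_left[OF S])
    show "\<forall>q\<in>S - (\<lambda>p. p - s) ` G. c (q + s) * Y q = 0"
      using c by (metis DiffD2 add_diff_cancel image_eqI mult_zero_left)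
  qed
  finally show ?thesis .
qed

lemma
  fixes c Y :: "int \<times> int \<Rightarrow> complex"
  assumes G: "finite G" and c: "\<And>p. p \<notin> G \<Longrightarrow> c p = 0"
  defines "S \<equiv> G \<union> (\<lambda>p. p - (0, 2)) ` G \<union> (\<lambda>p. p - (2, 0)) ` G \<union> (\<lambda>p. p - (2, 2)) ` G"
  shows sum_two_shift: "(\<Sum>p\<in>G. c p * (Y p - t * (Y (p - (0, 2)) + Y (p - (2, 0))) + t^2 * Y (p - (2, 2))))
      = (\<Sum>p\<in>S. two_shift t c p * Y p)"
    and two_shift_outside: "p \<notin> S \<Longrightarrow> two_shift t c p = 0"
proof -
  have S: "finite S" using G by (simp add: S_def)
  have translate: "(\<Sum>p\<in>G. c p * Y (p - s)) = (\<Sum>q\<in>S. c (q + s) * Y q)"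
    if "s \<in> {(0, 2), (2, 0), (2, 2)}" for s
    using that by (intro sum_translate[OF S _ c]) (auto simp: S_def)
  have unshifted: "(\<Sum>p\<in>G. c p * Y p) = (\<Sum>p\<in>S. c p * Y p)"
    using S c by (intro sum.mono_neutral_left) (auto simp: S_def)
  have "(\<Sum>p\<in>G. c p * (Y p - t * (Y (p - (0, 2)) + Y (p - (2, 0))) + t^2 * Y (p - (2, 2))))
      = (\<Sum>p\<in>G. c p * Y p) - t * ((\<Sum>p\<in>G. c p * Y (p - (0, 2)))
        + (\<Sum>p\<in>G. c p * Y (p - (2, 0)))) + t^2 * (\<Sum>p\<in>G. c p * Y (p - (2, 2)))"
    by (simp add: algebra_simps sum.distrib sum_subtractf sum_distrib_left)
  also have "\<dots> = (\<Sum>p\<in>S. c p * Y p) - t * ((\<Sum>p\<in>S. c (p + (0, 2)) * Y p)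
        + (\<Sum>p\<in>S. c (p + (2, 0)) * Y p)) + t^2 * (\<Sum>p\<in>S. c (p + (2, 2)) * Y p)"
    using translate unshifted by simp
  also have "\<dots> = (\<Sum>p\<in>S. two_shift t c p * Y p)"
    by (simp add: two_shift_def algebra_simps sum.distrib sum_subtractf sum_distrib_left)
  finally show "(\<Sum>p\<in>G. c p * (Y p - t * (Y (p - (0, 2)) + Y (p - (2, 0))) + t^2 * Y (p - (2, 2))))
      = (\<Sum>p\<in>S. two_shift t c p * Y p)" .
  assume "p \<notin> S"
  hence "p \<notin> G" "p + (0, 2) \<notin> G" "p + (2, 0) \<notin> G" "p + (2, 2) \<notin> G"
    unfolding S_def by (auto simp: image_iff)
  thus "two_shift t c p = 0" by (simp add: two_shift_def c)
qed

text \<open>The quadrant part of \<open>two_shift t c\<close> factors as \<open>(1 - t S\<^sub>2)(1 - t S\<^sub>1) c\<close>,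
  with \<open>S\<^sub>i\<close> compressed backward shifts of norm at most one.\<close>

lemma
  fixes c :: "int \<times> int \<Rightarrow> complex"
  assumes c: "square_summable c" "quadrant_part c = c" and t: "0 \<le> t" "t \<le> 1"
  shows l2_norm_two_shift_lower: "(1 - t)^2 * l2_norm c \<le> l2_norm (quadrant_part (two_shift (of_real t) c))"
    and l2_norm_two_shift_upper: "l2_norm (quadrant_part (two_shift (of_real t) c)) \<le> (1 + t)^2 * l2_norm c"
proof -
  define h1 :: "int \<times> int \<Rightarrow> int \<times> int" where "h1 p = p + (0, 2)" for p
  define h2 :: "int \<times> int \<Rightarrow> int \<times> int" where "h2 p = p + (2, 0)" for p
  have inj: "inj h1" "inj h2" by (auto simp: inj_def h1_def h2_def)
  define u where "u = (\<lambda>p. c p - of_real t * quadrant_part (\<lambda>p. c (h1 p)) p)"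
  define w where "w = quadrant_part (\<lambda>p. u (h2 p))"
  have u: "square_summable u" "(1 - t) * l2_norm c \<le> l2_norm u" "l2_norm u \<le> (1 + t) * l2_norm c"
    using square_summable_perturbation[OF c(1) inj(1) _ t(1)] l2_norm_perturbation_lower[OF c(1) inj(1) _ t(1)]
      l2_norm_perturbation_upper[OF c(1) inj(1) _ t(1)]
    unfolding u_def by (auto simp: quadrant_part_def)
  have w: "(1 - t) * l2_norm u \<le> l2_norm (\<lambda>p. u p - of_real t * w p)"
      "l2_norm (\<lambda>p. u p - of_real t * w p) \<le> (1 + t) * l2_norm u"
    using l2_norm_perturbation_lower[OF u(1) inj(2) _ t(1)] l2_norm_perturbation_upper[OF u(1) inj(2) _ t(1)]
    unfolding w_def by (auto simp: quadrant_part_def)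
  have c0: "c p = 0" if "\<not> (0 \<le> fst p \<and> 0 \<le> snd p)" for p
    using that fun_cong[OF c(2), of p] by (auto simp: quadrant_part_def split: if_splits)
  have factor: "quadrant_part (two_shift (of_real t) c) = (\<lambda>p. u p - of_real t * w p)"
  proof
    fix p
    show "quadrant_part (two_shift (of_real t) c) p = u p - of_real t * w p"
      using c0[of p] by (cases "0 \<le> fst p \<and> 0 \<le> snd p")
        (auto simp: quadrant_part_def two_shift_def u_def w_def h1_def h2_def algebra_simps power2_eq_square)
  qed
  have "(1 - t) * ((1 - t) * l2_norm c) \<le> (1 - t) * l2_norm u"
    using u(2) t by (intro mult_left_mono) auto
  thus "(1 - t)^2 * l2_norm c \<le> l2_norm (quadrant_part (two_shift (of_real t) c))"
    using w(1) by (simp add: factor power2_eq_square mult.assoc)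
  have "(1 + t) * l2_norm u \<le> (1 + t) * ((1 + t) * l2_norm c)"
    using u(3) t by (intro mult_left_mono) auto
  thus "l2_norm (quadrant_part (two_shift (of_real t) c)) \<le> (1 + t)^2 * l2_norm c"
    using w(2) by (simp add: factor power2_eq_square mult.assoc)
qed

lemma Kc_pos: "Kc N > 0"
  by (simp add: Kc_def)

lemma kp_add: "kp N a * kp N b = kp N (a + b)"
  by (simp add: kp_def powr_add Kc_pos)

lemma kp_0: "kp N 0 = 1"
  using Kc_pos[of N] by (simp add: kp_def)

locale onb_generator =
  fixes N :: nat and \<xi> :: vec and l :: nat
  assumes N: "N \<ge> 1"
    and onb: "orthonormal_basis N (\<lambda>(n::nat, m::nat). xinm N l \<xi> (int n) (int m)) (Hmod N \<xi>)"
    and bimul_expansion: "\<And>n m. bimul N n \<xi> m = (\<lambda>g.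
          kp N ((real n + real m) / 2) * xinm N l \<xi> (int n) (int m) g
        - kp N ((real n + real m - 2) / 2) * (xinm N l \<xi> (int n) (int m - 2) g
                                             + xinm N l \<xi> (int n - 2) (int m) g)
        + kp N ((real n + real m - 4) / 2) * xinm N l \<xi> (int n - 2) (int m - 2) g)"
begin

definition xi_int :: "int \<times> int \<Rightarrow> vec" where
  "xi_int p = xinm N l \<xi> (fst p) (snd p)"

lemma xi_int_outside_quadrant: "\<not> (0 \<le> fst p \<and> 0 \<le> snd p) \<Longrightarrow> xi_int p g = 0"
  by (auto simp: xi_int_def xinm_def)

lemma square_summable_xi_int: "square_summable (xi_int p)"
  unfolding xi_int_def by (rule L2_square_summable[OF xinm_L2])

lemma xi_int_orthonormal:
  assumes "0 \<le> fst p \<and> 0 \<le> snd p" "0 \<le> fst q \<and> 0 \<le> snd q"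
  shows "l2_inner (xi_int p) (xi_int q) = (if p = q then 1 else 0)"
proof -
  define v where "v = (\<lambda>(n::nat, m::nat). xinm N l \<xi> (int n) (int m))"
  have "ip (v a) (v b) = (if a = b then 1 else 0)" for a b
    using onb unfolding v_def orthonormal_basis_def by blast
  moreover have "xi_int p = v (nat (fst p), nat (snd p))" "xi_int q = v (nat (fst q), nat (snd q))"
    using assms by (simp_all add: xi_int_def v_def)
  moreover have "((nat (fst p), nat (snd p)) = (nat (fst q), nat (snd q))) = (p = q)"
    using assms by (auto simp: prod_eq_iff)
  ultimately show ?thesis by (simp add: ip_eq_l2_inner)
qed

lemma sum_sq_xi_int_combination:
  assumes S: "finite S" and c: "\<And>p. p \<notin> S \<Longrightarrow> c p = 0"
  shows "sum_sq (\<lambda>g. \<Sum>p\<in>S. c p * xi_int p g) = sum_sq (quadrant_part c)"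
proof -
  define Q where "Q = {p :: int \<times> int. 0 \<le> fst p \<and> 0 \<le> snd p}"
  have restrict: "(\<lambda>g. \<Sum>p\<in>S. c p * xi_int p g) = (\<lambda>g. \<Sum>p\<in>S \<inter> Q. c p * xi_int p g)"
    by (rule ext, rule sum.mono_neutral_right[OF S]) (auto simp: xi_int_outside_quadrant Q_def)
  have "sum_sq (\<lambda>g. \<Sum>p\<in>S \<inter> Q. c p * xi_int p g) = (\<Sum>p\<in>S \<inter> Q. (cmod (c p))^2)"
    using S by (intro sum_sq_orthonormal_combination) (auto simp: square_summable_xi_int xi_int_orthonormal Q_def)
  also have "\<dots> = sum_sq (quadrant_part c)"
    using S c by (subst sum_sq_finite_support[of "S \<inter> Q"]) (auto simp: quadrant_part_def Q_def)
  finally show ?thesis unfolding restrict .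
qed

lemma eta_eq_xi_int_combination:
  defines "t \<equiv> of_real (1 / Kc N)"
  shows "eta N \<xi> n m g = xi_int (int n, int m) g
     - t * (xi_int ((int n, int m) - (0, 2)) g + xi_int ((int n, int m) - (2, 0)) g)
     + t^2 * xi_int ((int n, int m) - (2, 2)) g"
proof -
  define s where "s = real n + real m"
  have k0: "kp N (- s / 2) * kp N (s / 2) = 1"
    by (simp add: kp_add kp_0)
  have k1: "kp N (- s / 2) * kp N ((s - 2) / 2) = t"
  proof -
    have "kp N (- s / 2) * kp N ((s - 2) / 2) = kp N (-1)"
      unfolding kp_add by (rule arg_cong[where f="kp N"]) (simp add: field_simps)
    thus ?thesis using Kc_pos[of N] by (simp add: kp_def powr_minus_divide t_def)
  qed
  have k2: "kp N (- s / 2) * kp N ((s - 4) / 2) = t^2"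
  proof -
    have "kp N (- s / 2) * kp N ((s - 4) / 2) = kp N (-2)"
      unfolding kp_add by (rule arg_cong[where f="kp N"]) (simp add: field_simps)
    thus ?thesis using Kc_pos[of N] by (simp add: kp_def powr_minus_divide power_divide t_def)
  qed
  have "eta N \<xi> n m g = kp N (- s / 2) * (kp N (s / 2) * xi_int (int n, int m) g
        - kp N ((s - 2) / 2) * (xi_int (int n, int m - 2) g + xi_int (int n - 2, int m) g)
        + kp N ((s - 4) / 2) * xi_int (int n - 2, int m - 2) g)"
    unfolding eta_def bimul_expansion s_def xi_int_def by simp
  also have "\<dots> = (kp N (- s / 2) * kp N (s / 2)) * xi_int (int n, int m) g
        - (kp N (- s / 2) * kp N ((s - 2) / 2)) * (xi_int (int n, int m - 2) g + xi_int (int n - 2, int m) g)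
        + (kp N (- s / 2) * kp N ((s - 4) / 2)) * xi_int (int n - 2, int m - 2) g"
    by (simp add: algebra_simps)
  finally show ?thesis unfolding k0 k1 k2 by simp
qed

lemma bimul_L2: "bimul N n \<xi> m \<in> L2 N"
  unfolding bimul_expansion by (intro L2_add L2_diff L2_scale xinm_L2)

lemma sum_sq_eta_combination:
  fixes c :: "nat \<times> nat \<Rightarrow> complex"
  assumes G: "finite G"
  defines "c' \<equiv> \<lambda>p. if p \<in> (\<lambda>(n, m). (int n, int m)) ` G then c (nat (fst p), nat (snd p)) else 0"
  shows "sum_sq (lin_comb (\<lambda>(n, m). eta N \<xi> n m) G c)
    = sum_sq (quadrant_part (two_shift (of_real (1 / Kc N)) c'))"
proof -
  define emb :: "nat \<times> nat \<Rightarrow> int \<times> int" where "emb = (\<lambda>(n, m). (int n, int m))"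
  define t :: complex where "t = of_real (1 / Kc N)"
  define Y where "Y g p = xi_int p g - t * (xi_int (p - (0, 2)) g + xi_int (p - (2, 0)) g) + t^2 * xi_int (p - (2, 2)) g"
    for g p
  define S where "S = emb ` G \<union> (\<lambda>p. p - (0, 2)) ` emb ` G \<union> (\<lambda>p. p - (2, 0)) ` emb ` G
    \<union> (\<lambda>p. p - (2, 2)) ` emb ` G"
  have fin: "finite (emb ` G)" "finite S" using G by (simp_all add: S_def)
  have c'0: "c' p = 0" if "p \<notin> emb ` G" for p using that by (simp add: c'_def emb_def)
  have "lin_comb (\<lambda>(n, m). eta N \<xi> n m) G c g = (\<Sum>x\<in>G. c' (emb x) * Y g (emb x))" for g
    unfolding lin_comb_def
    by (rule sum.cong) (auto simp: c'_def emb_def Y_def t_def eta_eq_xi_int_combination)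
  also have "(\<Sum>x\<in>G. c' (emb x) * Y g (emb x)) = (\<Sum>p\<in>emb ` G. c' p * Y g p)" for g
    by (subst sum.reindex) (auto simp: inj_on_def emb_def)
  finally have "lin_comb (\<lambda>(n, m). eta N \<xi> n m) G c
      = (\<lambda>g. \<Sum>p\<in>emb ` G. c' p * Y g p)" by (rule ext)
  also have "\<dots> = (\<lambda>g. \<Sum>p\<in>S. two_shift t c' p * xi_int p g)"
    unfolding Y_def S_def by (rule ext, rule sum_two_shift[OF fin(1) c'0])
  finally show ?thesis
    using sum_sq_xi_int_combination[OF fin(2), of "two_shift t c'"] two_shift_outside[OF fin(1) c'0]
    unfolding t_def S_def by simp
qed

lemma eta_riesz_bounds:
  defines "t \<equiv> 1 / Kc N"
  shows "riesz_bounds (\<lambda>(n, m). eta N \<xi> n m) UNIV ((1 - t)^4) ((1 + t)^4)"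
  unfolding riesz_bounds_def
proof (intro conjI ballI allI impI)
  have t: "0 < t" "t < 1" using N by (auto simp: t_def Kc_def)
  thus "0 < (1 - t)^4" "(1 - t)^4 \<le> (1 + t)^4" by (auto intro: power_mono)
  show "square_summable (case \<alpha> of (n, m) \<Rightarrow> eta N \<xi> n m)" for \<alpha>
    by (cases \<alpha>) (auto intro: L2_square_summable eta_L2 bimul_L2)
  fix G :: "(nat \<times> nat) set" and c :: "nat \<times> nat \<Rightarrow> complex" assume G: "finite G"
  define c' where "c' p = (if p \<in> (\<lambda>(n, m). (int n, int m)) ` G then c (nat (fst p), nat (snd p)) else 0)"
    for p :: "int \<times> int"
  define d where "d = quadrant_part (two_shift (of_real t) c')"
  have c'_support: "finite ((\<lambda>(n, m). (int n, int m)) ` G)"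
      "\<And>p. p \<notin> (\<lambda>(n, m). (int n, int m)) ` G \<Longrightarrow> c' p = 0"
    using G by (simp_all add: c'_def)
  have c': "square_summable c'" "quadrant_part c' = c'"
    by (rule square_summable_finite_support[OF c'_support])
      (auto simp: quadrant_part_def c'_def fun_eq_iff)
  have "sum_sq c' = (\<Sum>p\<in>(\<lambda>(n, m). (int n, int m)) ` G. (cmod (c' p))^2)"
    by (rule sum_sq_finite_support[OF c'_support])
  also have "\<dots> = (\<Sum>x\<in>G. (cmod (c x))^2)"
    by (subst sum.reindex) (auto simp: inj_on_def c'_def split_def intro!: sum.cong)
  finally have sum_c': "(l2_norm c')^2 = (\<Sum>x\<in>G. (cmod (c x))^2)" by (simp add: l2_norm_power2)
  have sum_d: "sum_sq (lin_comb (\<lambda>(n, m). eta N \<xi> n m) G c) = (l2_norm d)^2"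
    unfolding l2_norm_power2 d_def t_def c'_def by (rule sum_sq_eta_combination[OF G])
  have "((1 - t)^2 * l2_norm c')^2 \<le> (l2_norm d)^2"
    using l2_norm_two_shift_lower[OF c'] t unfolding d_def by (intro power_mono) (auto simp: l2_norm_nonneg)
  thus "(1 - t)^4 * (\<Sum>x\<in>G. (cmod (c x))^2) \<le> sum_sq (lin_comb (\<lambda>(n, m). eta N \<xi> n m) G c)"
    unfolding sum_d sum_c'[symmetric] by (simp add: power_mult_distrib flip: power_mult)
  have "(l2_norm d)^2 \<le> ((1 + t)^2 * l2_norm c')^2"
    using l2_norm_two_shift_upper[OF c'] t unfolding d_def by (intro power_mono) (auto simp: l2_norm_nonneg)
  thus "sum_sq (lin_comb (\<lambda>(n, m). eta N \<xi> n m) G c) \<le> (1 + t)^4 * (\<Sum>x\<in>G. (cmod (c x))^2)"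
    unfolding sum_d sum_c'[symmetric] by (simp add: power_mult_distrib flip: power_mult)
qed

end

section \<open>The radial decomposition\<close>

lemma lin_comb_eta:
  "lin_comb (\<lambda>(n, m). eta N \<xi> n m) G c
    = (\<lambda>g. \<Sum>(n, m)\<in>G. (c (n, m) * kp N (- (real n + real m) / 2)) * bimul N n \<xi> m g)"
  by (simp add: lin_comb_def eta_def split_def mult.assoc)

lemma bimul_eq_scaled_eta:
  "bimul N n \<xi> m = (\<lambda>g. kp N ((real n + real m) / 2) * eta N \<xi> n m g)"
proof
  fix g
  have "(real n + real m) / 2 + - (real n + real m) / 2 = 0" by (simp add: field_simps)
  hence "kp N ((real n + real m) / 2) * kp N (- (real n + real m) / 2) = 1"
    by (simp only: kp_add kp_0)
  thus "bimul N n \<xi> m g = kp N ((real n + real m) / 2) * eta N \<xi> n m g"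
    unfolding eta_def by (metis mult.assoc mult_1)
qed

lemma lin_comb_eta_in_Hmod:
  assumes "\<And>n m. bimul N n \<xi> m \<in> L2 N" "finite G"
  shows "lin_comb (\<lambda>(n, m). eta N \<xi> n m) G c \<in> Hmod N \<xi>"
proof -
  have "eta N \<xi> n m \<in> lincomb {bimul N n \<xi> m | n m. True}" for n m
    unfolding eta_def by (intro lincomb_scale lincomb_mem) auto
  hence "lin_comb (\<lambda>(n, m). eta N \<xi> n m) G c \<in> lincomb {bimul N n \<xi> m | n m. True}"
    unfolding lin_comb_def using assms(2) by (intro lincomb_sum) auto
  thus ?thesis
    unfolding Hmod_def using lincomb_cspan[of "{bimul N n \<xi> m | n m. True}"] assms(1) by blast
qed

lemma cspan_eta_eq_cspan_Hmod:
  assumes L2: "\<And>i n m. i \<in> J \<Longrightarrow> bimul N n (\<xi> i) m \<in> L2 N"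
  shows "cspan N ((\<lambda>(i, n, m). eta N (\<xi> i) n m) ` (J \<times> UNIV)) = cspan N (\<Union>i\<in>J. Hmod N (\<xi> i))"
    (is "cspan N ?E = _")
proof
  have "eta N (\<xi> i) n m \<in> Hmod N (\<xi> i)" if "i \<in> J" for i n m
    using lin_comb_eta_in_Hmod[OF L2[OF that], of "{(n, m)}" "\<lambda>_. 1"]
    by (simp add: lin_comb_def)
  thus "cspan N ?E \<subseteq> cspan N (\<Union>i\<in>J. Hmod N (\<xi> i))"
    by (intro cspan_mono) auto
next
  have E_L2: "?E \<subseteq> L2 N" using L2 by (auto intro: L2_scale simp: eta_def)
  have "bimul N n (\<xi> i) m \<in> lincomb ?E" if "i \<in> J" for i n m
  proof -
    have "eta N (\<xi> i) n m \<in> ?E" using that by (auto intro!: image_eqI[where x="(i, n, m)"])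
    thus ?thesis unfolding bimul_eq_scaled_eta by (intro lincomb_scale lincomb_mem)
  qed
  hence "Hmod N (\<xi> i) \<subseteq> cspan N ?E" if "i \<in> J" for i
    unfolding Hmod_def using that lincomb_cspan[OF E_L2] by (intro cspan_trans[OF E_L2]) blast
  thus "cspan N (\<Union>i\<in>J. Hmod N (\<xi> i)) \<subseteq> cspan N ?E"
    by (intro cspan_trans[OF E_L2]) blast
qed

lemma eta_riesz_bounds_transfer:
  assumes riesz: "riesz_bounds (\<lambda>(n, m). eta N \<xi> n m) UNIV a b"
    and L2: "\<And>n m. bimul N n \<xi>' m \<in> L2 N"
    and bound: "\<And>\<zeta> \<zeta>' F c. (\<zeta>, \<zeta>') \<in> {(\<xi>, \<xi>'), (\<xi>', \<xi>)} \<Longrightarrow> finite F \<Longrightarrow>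
       nrm (\<lambda>g. \<Sum>(n, m)\<in>F. c (n, m) * bimul N n \<zeta>' m g)
         \<le> B * nrm (\<lambda>g. \<Sum>(n, m)\<in>F. c (n, m) * bimul N n \<zeta> m g)"
  shows "riesz_bounds (\<lambda>(n, m). eta N \<xi>' n m) UNIV (a / (max 1 B)^2) ((max 1 B)^2 * b)"
proof (rule riesz_bounds_transfer[OF riesz])
  show "square_summable (case \<alpha> of (n, m) \<Rightarrow> eta N \<xi>' n m)" for \<alpha>
    by (cases \<alpha>) (auto intro: L2_square_summable eta_L2 L2)
  have "l2_norm (lin_comb (\<lambda>(n, m). eta N \<zeta>' n m) F c)
      \<le> max 1 B * l2_norm (lin_comb (\<lambda>(n, m). eta N \<zeta> n m) F c)"
    if "(\<zeta>, \<zeta>') \<in> {(\<xi>, \<xi>'), (\<xi>', \<xi>)}" "finite F" for \<zeta> \<zeta>' F c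
  proof -
    let ?c = "\<lambda>(n, m). c (n, m) * kp N (- (real n + real m) / 2)"
    have "nrm (\<lambda>g. \<Sum>(n, m)\<in>F. ?c (n, m) * bimul N n \<zeta>' m g)
        \<le> B * nrm (\<lambda>g. \<Sum>(n, m)\<in>F. ?c (n, m) * bimul N n \<zeta> m g)"
      by (rule bound[OF that])
    also have "\<dots> \<le> max 1 B * nrm (\<lambda>g. \<Sum>(n, m)\<in>F. ?c (n, m) * bimul N n \<zeta> m g)"
      by (intro mult_right_mono) (auto simp: nrm_eq_l2_norm l2_norm_nonneg)
    finally show ?thesis unfolding lin_comb_eta nrm_eq_l2_norm by simp
  qed
  thus "l2_norm (lin_comb (\<lambda>(n, m). eta N \<xi>' n m) F c)
      \<le> max 1 B * l2_norm (lin_comb (\<lambda>(n, m). eta N \<xi> n m) F c)"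
    "l2_norm (lin_comb (\<lambda>(n, m). eta N \<xi> n m) F c)
      \<le> max 1 B * l2_norm (lin_comb (\<lambda>(n, m). eta N \<xi>' n m) F c)" if "finite F" for F c
    using that by blast+
qed simp

lemma eta_family_riesz_bounds:
  fixes \<xi> :: "'j \<Rightarrow> vec"
  assumes i0: "i0 \<in> J" "riesz_bounds (\<lambda>(n, m). eta N (\<xi> i0) n m) UNIV a b"
    and L2: "\<And>i n m. i \<in> J \<Longrightarrow> bimul N n (\<xi> i) m \<in> L2 N"
    and bound: "\<exists>B. \<forall>i j F c. i \<in> J \<longrightarrow> j \<in> J \<longrightarrow> finite F \<longrightarrow>
       nrm (\<lambda>g. \<Sum>(n, m)\<in>F. c (n, m) * bimul N n (\<xi> j) m g)
         \<le> B * nrm (\<lambda>g. \<Sum>(n, m)\<in>F. c (n, m) * bimul N n (\<xi> i) m g)"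
    and orth: "\<And>i j x y. i \<in> J \<Longrightarrow> j \<in> J \<Longrightarrow> i \<noteq> j \<Longrightarrow> x \<in> Hmod N (\<xi> i) \<Longrightarrow> y \<in> Hmod N (\<xi> j)
       \<Longrightarrow> ip x y = 0"
  shows "\<exists>a' b'. riesz_bounds (\<lambda>(i, n, m). eta N (\<xi> i) n m) (J \<times> UNIV) a' b'"
proof -
  obtain B where B: "\<forall>i j F c. i \<in> J \<longrightarrow> j \<in> J \<longrightarrow> finite F \<longrightarrow>
       nrm (\<lambda>g. \<Sum>(n, m)\<in>F. c (n, m) * bimul N n (\<xi> j) m g)
         \<le> B * nrm (\<lambda>g. \<Sum>(n, m)\<in>F. c (n, m) * bimul N n (\<xi> i) m g)"
    using bound by blast
  have slice: "riesz_bounds (\<lambda>(n, m). eta N (\<xi> i) n m) UNIV (a / (max 1 B)^2) ((max 1 B)^2 * b)"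
    if "i \<in> J" for i
    using B i0(1) that by (intro eta_riesz_bounds_transfer[OF i0(2) L2[OF that]]) auto
  have "riesz_bounds (\<lambda>(i, n, m). eta N (\<xi> i) n m) (J \<times> UNIV) (a / (max 1 B)^2) ((max 1 B)^2 * b)"
  proof (rule riesz_bounds_orthogonal_sum)
    show "riesz_bounds (\<lambda>x. case (i, x) of (i, n, m) \<Rightarrow> eta N (\<xi> i) n m) UNIV
        (a / (max 1 B)^2) ((max 1 B)^2 * b)" if "i \<in> J" for i
      using slice[OF that] by (simp add: split_def)
    show "lin_comb (\<lambda>x. case (i, x) of (i, n, m) \<Rightarrow> eta N (\<xi> i) n m) G c \<in> Hmod N (\<xi> i)"
      if "i \<in> J" "finite G" for i G c
      using lin_comb_eta_in_Hmod[OF L2[OF that(1)] that(2)] by (simp add: split_def)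
  qed (use orth i0(1) in \<open>auto simp: ip_eq_l2_inner\<close>)
  thus ?thesis by blast
qed

theorem mainTheorem2:
  fixes N :: nat and \<xi> :: "nat \<Rightarrow> vec" and l :: "nat \<Rightarrow> nat" and \<sigma> :: "nat \<Rightarrow> int"
  assumes N: "N \<ge> 1"
    and xi_in: "\<And>i. i \<ge> 1 \<Longrightarrow> \<xi> i \<in> L2 N \<and> (\<forall>g. length g \<noteq> l i \<longrightarrow> \<xi> i g = 0) \<and> nrm (\<xi> i) = 1 \<and> l i \<ge> 1"
    and fin1: "finite {i. i \<ge> 1 \<and> l i = 1}"
    and orth: "\<And>i j x y. i \<ge> 1 \<Longrightarrow> j \<ge> 1 \<Longrightarrow> i \<noteq> j \<Longrightarrow> x \<in> Hmod N (\<xi> i) \<Longrightarrow> y \<in> Hmod N (\<xi> j) \<Longrightarrow> ip x y = 0"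
    and decomp: "ocompl N = cspan N (\<Union>i\<in>{i. i \<ge> 1}. Hmod N (\<xi> i))"
    and onb: "\<And>i. i \<ge> 1 \<Longrightarrow> l i \<ge> 2 \<Longrightarrow>
       orthonormal_basis N (\<lambda>(n::nat, m::nat). xinm N (l i) (\<xi> i) (int n) (int m)) (Hmod N (\<xi> i))"
    and form2: "\<And>i n m. i \<ge> 1 \<Longrightarrow> l i \<ge> 2 \<Longrightarrow>
       bimul N n (\<xi> i) m = (\<lambda>g.
          kp N ((real n + real m) / 2) * xinm N (l i) (\<xi> i) (int n) (int m) g
        - kp N ((real n + real m - 2) / 2) * (xinm N (l i) (\<xi> i) (int n) (int m - 2) g
                                             + xinm N (l i) (\<xi> i) (int n - 2) (int m) g)
        + kp N ((real n + real m - 4) / 2) * xinm N (l i) (\<xi> i) (int n - 2) (int m - 2) g)"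
    and sig: "\<And>i. i \<ge> 1 \<Longrightarrow> l i = 1 \<Longrightarrow> \<sigma> i \<in> {-1, 1}"
    and form1: "\<And>i n m. i \<ge> 1 \<Longrightarrow> l i = 1 \<Longrightarrow>
       bimul N n (\<xi> i) m = (\<lambda>g.
          kp N ((real n + real m) / 2) * xinm N 1 (\<xi> i) (int n) (int m) g
        - kp N ((real n + real m - 2) / 2) * (xinm N 1 (\<xi> i) (int n) (int m - 2) g
                                             + xinm N 1 (\<xi> i) (int n - 2) (int m) g
                                             + of_int (\<sigma> i) * xinm N 1 (\<xi> i) (int n - 1) (int m - 1) g)
        + (\<Sum>k\<in>{2..n + m + 2}. of_int ((- \<sigma> i) ^ k) * kp N ((real n + real m - 2 * real k) / 2) *
             (of_int (\<sigma> i) * xinm N 1 (\<xi> i) (int n - int k - 1) (int m - int k + 1) g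
              + of_int (\<sigma> i) * xinm N 1 (\<xi> i) (int n - int k + 1) (int m - int k - 1) g
              + 2 * xinm N 1 (\<xi> i) (int n - int k) (int m - int k) g)))"
    and T_bdd: "\<exists>B. \<forall>i j F c. i \<ge> 1 \<longrightarrow> j \<ge> 1 \<longrightarrow> finite F \<longrightarrow>
       nrm (\<lambda>g. \<Sum>(n, m)\<in>F. c (n, m) * xinm N (l j) (\<xi> j) (int n) (int m) g)
         \<le> B * nrm (\<lambda>g. \<Sum>(n, m)\<in>F. c (n, m) * xinm N (l i) (\<xi> i) (int n) (int m) g)"
    and S_bdd: "\<exists>B. \<forall>i j F c. i \<ge> 1 \<longrightarrow> j \<ge> 1 \<longrightarrow> finite F \<longrightarrow>
       nrm (\<lambda>g. \<Sum>(n, m)\<in>F. c (n, m) * bimul N n (\<xi> j) m g)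
         \<le> B * nrm (\<lambda>g. \<Sum>(n, m)\<in>F. c (n, m) * bimul N n (\<xi> i) m g)"
  shows "riesz_basis N (\<lambda>(i, n, m). eta N (\<xi> i) n m) {(i, n, m). i \<ge> 1} (ocompl N)
    \<and> (\<forall>x\<in>ocompl N. \<exists>!b. (\<forall>\<alpha>. \<alpha> \<notin> {(i, n, m). i \<ge> 1} \<longrightarrow> b \<alpha> = 0)
         \<and> sq_summable b {(i, n, m). i \<ge> 1}
         \<and> has_sum_l2 N (\<lambda>\<alpha> g. b \<alpha> * (case \<alpha> of (i, n, m) \<Rightarrow> eta N (\<xi> i) n m g))
              {(i, n, m). i \<ge> 1} x)"
proof -
  define J where "J = {i :: nat. 1 \<le> i}"
  define v where "v = (\<lambda>(i, n, m). eta N (\<xi> i) n m)"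
  have bimul_in_L2: "bimul N n (\<xi> i) m \<in> L2 N" if "i \<in> J" for i n m
  proof -
    have i: "i \<ge> 1" "l i \<ge> 1" using that xi_in[of i] by (auto simp: J_def)
    show ?thesis
    proof (cases "l i = 1")
      case True
      show ?thesis unfolding form1[OF i(1) True]
        by (intro L2_add L2_diff L2_scale xinm_L2 L2_sum finite_atLeastAtMost)
    next
      case False
      hence "l i \<ge> 2" using i by simp
      show ?thesis unfolding form2[OF i(1) \<open>l i \<ge> 2\<close>] by (intro L2_add L2_diff L2_scale xinm_L2)
    qed
  qed
  obtain i0 where i0: "i0 \<in> J" "l i0 \<ge> 2"
  proof -
    have "infinite J" unfolding J_def using infinite_Ici[of "1 :: nat"] by (simp add: atLeast_def)
    hence "\<not> J \<subseteq> {i. i \<ge> 1 \<and> l i = 1}" using fin1 finite_subset by blast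
    thus ?thesis using xi_in that by (fastforce simp: J_def)
  qed
  interpret onb_generator N "\<xi> i0" "l i0"
    using N i0 onb form2 by unfold_locales (auto simp: J_def)
  have "\<exists>ra rb. riesz_bounds v (J \<times> UNIV) ra rb"
    unfolding v_def using S_bdd orth
    by (intro eta_family_riesz_bounds[where \<xi> = \<xi>, OF i0(1) eta_riesz_bounds bimul_in_L2]) (auto simp: J_def)
  then obtain ra rb where riesz: "riesz_bounds v (J \<times> UNIV) ra rb" by blast
  have L2: "v ` (J \<times> UNIV) \<subseteq> L2 N"
    using bimul_in_L2 by (auto simp: v_def intro: eta_L2)
  have "cspan N (v ` (J \<times> UNIV)) = cspan N (\<Union>i\<in>J. Hmod N (\<xi> i))"
    unfolding v_def by (rule cspan_eta_eq_cspan_Hmod) (rule bimul_in_L2)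
  hence "cspan N (v ` (J \<times> UNIV)) = ocompl N" by (simp add: decomp J_def)
  moreover have "{(i, n, m). i \<ge> 1} = J \<times> (UNIV :: (nat \<times> nat) set)" by (auto simp: J_def)
  moreover have "(\<lambda>\<alpha> g. b \<alpha> * (case \<alpha> of (i, n, m) \<Rightarrow> eta N (\<xi> i) n m g)) = (\<lambda>\<alpha> g. b \<alpha> * v \<alpha> g)"
    for b :: "nat \<times> nat \<times> nat \<Rightarrow> complex"
    by (auto simp: v_def fun_eq_iff)
  ultimately show ?thesis
    using riesz_basis_if_riesz_bounds[OF riesz L2] riesz_bounds_unique_expansion[OF riesz L2]
    by (simp add: v_def[symmetric])
qed

end
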